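(* Let $s\ge2$, $k,K\in\mathbb{N}$ and $0<R\le1$. For every $0<\delta<\frac{1}{s-1}$ and $0\le\alpha<1$ there is a constant $\lambda=\lambda(s,k,K,R,\delta,\alpha)>0$ such that for every $(s,k,K)$-two layer system $X$ with $R_{\operatorname{nint}}\ge R$, if $X$ is a $\lambda$-expanding HDE-System, then $X$ has the $((\delta,\alpha),\varepsilon_0)$-unique neighbor expansion property with $$\varepsilon_0=\min\left\{\frac{R^2(1-\alpha)(1-(s-1)\delta)}{4}\cdot\frac1K,\ \frac{7(1-\alpha)^2(1-(s-1)\delta)^3}{64(1+15(s-1)\delta)s^3(s-1)^4}\cdot\frac1{k^2}\right\}.$$
   Context: An $(s,k,K)$-two layer system is a triple $X=(V,E,T)$ where: $V$ is a finite set; $E\subseteq 2^V$ with $|\tau|=k$ for all $\tau\in E$ and $\bigcup_{\tau\in E}\tau=V$; $T\subseteq 2^E$ with $|\sigma|=K$ for all $\sigma\in T$ and $\bigcup_{\sigma\in T}\sigma=E$. Write $v\in\sigma$ if $v\in\tau$ for some $\tau\in\sigma$; it is required that $2\le|\{\tau\in\sigma:v\in\tau\}|\le s$ for all $\sigma\in T$, $v\in\sigma$. A positive $w:T\to\mathbb{R}_{>0}$ is fixed and extended by $w(\tau)=\sum_{\sigma\ni\tau}w(\sigma)$ ($\tau\in E$), $w(v)=\sum_{\sigma\in T,v\in\sigma}w(\sigma)$, $w(B)=\sum_{\eta\in B}w(\eta)$. Graphs: for a weighted graph $(V,E,m)$, $m(v)=\sum_{e\ni v}m(e)$, $m(U)=\sum_{v\in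 U}m(v)$, $m(U_1,U_2)=\sum_{(u_1,u_2)\in U_1\times U_2,\{u_1,u_2\}\in E}m(\{u_1,u_2\})$, $h_G=\min_{\emptyset\ne U\subsetneq V}\frac{m(U,V\setminus U)m(V)}{m(U)m(V\setminus U)}$; $G$ is a $\lambda$-expander if $1-h_G\le\lambda$. The ground graph: vertex set $V$, distinct $u,v$ adjacent iff some $\tau\in E$ contains both, weight $\sum_{\tau\in E,u,v\in\tau}w(\tau)$. The link of $v$: vertex set $E_v=\{\tau\in E:v\in\tau\}$, distinct $\tau_1,\tau_2$ adjacent iff some $\sigma\in T$ contains both, weight $m_v(\{\tau_1,\tau_2\})=\sum_{\sigma\in T,\tau_1,\tau_2\in\sigma}w(\sigma)$; $m_v(\tau)$ is the sum of weights of link edges at $\tau$, $m_v(B)=\sum_{\tau\in B}m_v(\tau)$. The non-intersecting graph: vertex set $E$, edges $\{\tau,\tau'\}$ with $\tau\cap\tau'=\emptyset$ and some $\sigma\in T$ containing both, weight $\sum_{\sigma\in T,\tau,\tau'\in\sigma}w(\sigma)$. $R_{\operatorname{nint}}=Q^{\min}_{\operatorname{nint}}/Q^{\max}_{\operatorname{nint}}$, where $Q^{\max}_{\operatorname{nint}}$ (resp. $Q^{\min}_{\operatorname{nint}}$) is the maximum (resp. minimum) over $\tau\in E$, $\sigma\in T$ with $\tau\in\sigma$, of the number of $\tau'\in\sigma$ disjoint from $\tau$. $X$ is a $\lambda$-expanding HDE-System if the ground graph and all links are $\lambda$-expanders and the non-intersecting graph either has no edges or is a $\lambda$-expander. Local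 smallness: for $A\subseteq E$, $A_v=A\cap E_v$; $v$ is $\delta$-large w.r.t. $A$ if $m_v(A_v)/m_v(E_v)\ge\delta$; $A$ is $(\delta,\alpha)$-locally small if $\sum_{v\ \delta\text{-large}}m_v(A_v)\le\alpha\,w(A)$. $X$ has the $((\delta,\alpha),\varepsilon_0)$-unique neighbor expansion property if every non-empty $(\delta,\alpha)$-locally small $A\subseteq E$ with $w(A)/w(E)<\varepsilon_0$ admits $\sigma\in T$ with $|A\cap\sigma|=1$. *)

theory Defs
  imports Complex_Main 
begin

text \<open>Vertices have type 'v; a face tau is a 'v set; a top face sigma is a 'v set set.\<close>

definition two_layer_system ::
  "nat \<Rightarrow> nat \<Rightarrow> nat \<Rightarrow> 'v set \<Rightarrow> 'v set set \<Rightarrow> 'v set set set \<Rightarrow> bool" where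
  "two_layer_system s k K V E T \<longleftrightarrow>
     finite V \<and>
     E \<subseteq> Pow V \<and> (\<forall>\<tau>\<in>E. card \<tau> = k) \<and> \<Union>E = V \<and>
     T \<subseteq> Pow E \<and> (\<forall>\<sigma>\<in>T. card \<sigma> = K) \<and> \<Union>T = E \<and>
     (\<forall>\<sigma>\<in>T. \<forall>v\<in>\<Union>\<sigma>. 2 \<le> card {\<tau>\<in>\<sigma>. v \<in> \<tau>} \<and> card {\<tau>\<in>\<sigma>. v \<in> \<tau>} \<le> s)"

definition wE :: "'v set set set \<Rightarrow> ('v set set \<Rightarrow> real) \<Rightarrow> 'v set \<Rightarrow> real" where
  "wE T w \<tau> = (\<Sum>\<sigma>\<in>{\<sigma>\<in>T. \<tau> \<in> \<sigma>}. w \<sigma>)"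

definition wV :: "'v set set set \<Rightarrow> ('v set set \<Rightarrow> real) \<Rightarrow> 'v \<Rightarrow> real" where
  "wV T w v = (\<Sum>\<sigma>\<in>{\<sigma>\<in>T. v \<in> \<Union>\<sigma>}. w \<sigma>)"

definition wSet :: "'v set set set \<Rightarrow> ('v set set \<Rightarrow> real) \<Rightarrow> 'v set set \<Rightarrow> real" where
  "wSet T w A = (\<Sum>\<tau>\<in>A. wE T w \<tau>)"

text \<open>A weighted graph is given by a finite vertex set U and a symmetric weight function
  m, where m x y is the weight of the edge {x,y} (0 if x,y are not adjacent or x = y).\<close>

definition gdeg :: "'a set \<Rightarrow> ('a \<Rightarrow> 'a \<Rightarrow> real) \<Rightarrow> 'a \<Rightarrow> real" where
  "gdeg U m x = (\<Sum>y\<in>U. m x y)"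

definition gvol :: "'a set \<Rightarrow> ('a \<Rightarrow> 'a \<Rightarrow> real) \<Rightarrow> 'a set \<Rightarrow> real" where
  "gvol U m B = (\<Sum>x\<in>B. gdeg U m x)"

definition gcut :: "('a \<Rightarrow> 'a \<Rightarrow> real) \<Rightarrow> 'a set \<Rightarrow> 'a set \<Rightarrow> real" where
  "gcut m U1 U2 = (\<Sum>(x,y)\<in>U1 \<times> U2. m x y)"

definition cheeger :: "'a set \<Rightarrow> ('a \<Rightarrow> 'a \<Rightarrow> real) \<Rightarrow> real" where
  "cheeger U m = Min {gcut m B (U - B) * gvol U m U / (gvol U m B * gvol U m (U - B)) | B.
                        B \<noteq> {} \<and> B \<subset> U}"

definition expander :: "'a set \<Rightarrow> ('a \<Rightarrow> 'a \<Rightarrow> real) \<Rightarrow> real \<Rightarrow> bool" where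
  "expander U m lam \<longleftrightarrow> 1 - cheeger U m \<le> lam"

definition ground_w :: "'v set set \<Rightarrow> 'v set set set \<Rightarrow> ('v set set \<Rightarrow> real) \<Rightarrow> 'v \<Rightarrow> 'v \<Rightarrow> real" where
  "ground_w E T w u v = (if u \<noteq> v then (\<Sum>\<tau>\<in>{\<tau>\<in>E. u \<in> \<tau> \<and> v \<in> \<tau>}. wE T w \<tau>) else 0)"

definition Ev :: "'v set set \<Rightarrow> 'v \<Rightarrow> 'v set set" where
  "Ev E v = {\<tau>\<in>E. v \<in> \<tau>}"

definition link_w :: "'v set set set \<Rightarrow> ('v set set \<Rightarrow> real) \<Rightarrow> 'v set \<Rightarrow> 'v set \<Rightarrow> real" where
  "link_w T w \<tau>1 \<tau>2 = (if \<tau>1 \<noteq> \<tau>2 then (\<Sum>\<sigma>\<in>{\<sigma>\<in>T. \<tau>1 \<in> \<sigma> \<and> \<tau>2 \<in> \<sigma>}. w \<sigma>) else 0)"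

definition link_vol :: "'v set set \<Rightarrow> 'v set set set \<Rightarrow> ('v set set \<Rightarrow> real) \<Rightarrow> 'v \<Rightarrow> 'v set set \<Rightarrow> real" where
  "link_vol E T w v B = gvol (Ev E v) (link_w T w) B"

definition nint_w :: "'v set set set \<Rightarrow> ('v set set \<Rightarrow> real) \<Rightarrow> 'v set \<Rightarrow> 'v set \<Rightarrow> real" where
  "nint_w T w \<tau>1 \<tau>2 = (if \<tau>1 \<noteq> \<tau>2 \<and> \<tau>1 \<inter> \<tau>2 = {}
                          then (\<Sum>\<sigma>\<in>{\<sigma>\<in>T. \<tau>1 \<in> \<sigma> \<and> \<tau>2 \<in> \<sigma>}. w \<sigma>) else 0)"

definition nint_has_edges :: "'v set set set \<Rightarrow> bool" where
  "nint_has_edges T \<longleftrightarrow> (\<exists>\<sigma>\<in>T. \<exists>\<tau>1\<in>\<sigma>. \<exists>\<tau>2\<in>\<sigma>. \<tau>1 \<noteq> \<tau>2 \<and> \<tau>1 \<inter> \<tau>2 = {})"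

definition Qnint :: "'v set \<Rightarrow> 'v set set \<Rightarrow> nat" where
  "Qnint \<tau> \<sigma> = card {\<tau>'\<in>\<sigma>. \<tau> \<inter> \<tau>' = {}}"

definition R_nint :: "'v set set set \<Rightarrow> real" where
  "R_nint T = real (Min {Qnint \<tau> \<sigma> | \<tau> \<sigma>. \<sigma> \<in> T \<and> \<tau> \<in> \<sigma>})
            / real (Max {Qnint \<tau> \<sigma> | \<tau> \<sigma>. \<sigma> \<in> T \<and> \<tau> \<in> \<sigma>})"

definition HDE_system ::
  "'v set \<Rightarrow> 'v set set \<Rightarrow> 'v set set set \<Rightarrow> ('v set set \<Rightarrow> real) \<Rightarrow> real \<Rightarrow> bool" where
  "HDE_system V E T w lam \<longleftrightarrow>
     expander V (ground_w E T w) lam \<and>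
     (\<forall>v\<in>V. expander (Ev E v) (link_w T w) lam) \<and>
     (\<not> nint_has_edges T \<or> expander E (nint_w T w) lam)"

definition delta_large ::
  "'v set set \<Rightarrow> 'v set set set \<Rightarrow> ('v set set \<Rightarrow> real) \<Rightarrow> real \<Rightarrow> 'v set set \<Rightarrow> 'v \<Rightarrow> bool" where
  "delta_large E T w \<delta> A v \<longleftrightarrow>
     link_vol E T w v (A \<inter> Ev E v) / link_vol E T w v (Ev E v) \<ge> \<delta>"

definition locally_small ::
  "'v set \<Rightarrow> 'v set set \<Rightarrow> 'v set set set \<Rightarrow> ('v set set \<Rightarrow> real) \<Rightarrow> real \<Rightarrow> real \<Rightarrow> 'v set set \<Rightarrow> bool" where
  "locally_small V E T w \<delta> \<alpha> A \<longleftrightarrow>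
     (\<Sum>v\<in>{v\<in>V. delta_large E T w \<delta> A v}. link_vol E T w v (A \<inter> Ev E v)) \<le> \<alpha> * wSet T w A"

definition unique_neighbor_expansion ::
  "'v set \<Rightarrow> 'v set set \<Rightarrow> 'v set set set \<Rightarrow> ('v set set \<Rightarrow> real) \<Rightarrow> real \<Rightarrow> real \<Rightarrow> real \<Rightarrow> bool" where
  "unique_neighbor_expansion V E T w \<delta> \<alpha> \<epsilon>0 \<longleftrightarrow>
     (\<forall>A. A \<subseteq> E \<longrightarrow> A \<noteq> {} \<longrightarrow> locally_small V E T w \<delta> \<alpha> A \<longrightarrow>
          wSet T w A / wSet T w E < \<epsilon>0 \<longrightarrow> (\<exists>\<sigma>\<in>T. card (A \<inter> \<sigma>) = 1))"

end

theory Submission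
  imports Defs "HOL-Analysis.Convex"
begin

text \<open>
  Suppose a non-empty, locally small set \<open>A\<close> of faces with small weight had no unique
  neighbour, so that every top face meeting \<open>A\<close> meets it at least twice. Then a face of \<open>A\<close>
  all of whose vertices are light (not \<open>\<delta>\<close>-large) has, in every top face through it, a
  partner in \<open>A\<close> that is either disjoint from it, an edge of the non-intersecting graph, or
  shares a vertex with it, an edge in the link of that vertex. Local smallness says that
  these faces carry a \<open>1 - \<alpha>\<close> fraction of the weight of \<open>A\<close>, while the expander mixing bound
  in the non-intersecting graph and in the links of light vertices makes the partner weight
  a small multiple of it. The density term arising in the links is governed by a capped
  level function on the vertices, whose dyadic level sets are controlled by expansion of
  the ground graph together with Cauchy-Schwarz. Adding up, the weight of \<open>A\<close> would be
  strictly smaller than itself.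
\<close>

section \<open>Weighted graphs\<close>

lemma gvol_eq_internal_plus_cut:
  assumes "finite U" "B \<subseteq> U"
  shows "gvol U m B = (\<Sum>x\<in>B. \<Sum>y\<in>B. m x y) + gcut m B (U - B)"
proof -
  have "gvol U m B = (\<Sum>x\<in>B. (\<Sum>y\<in>B. m x y) + (\<Sum>y\<in>U - B. m x y))"
    unfolding gvol_def gdeg_def using assms by (intro sum.cong) (auto simp: sum.subset_diff)
  also have "\<dots> = (\<Sum>x\<in>B. \<Sum>y\<in>B. m x y) + gcut m B (U - B)"
    unfolding gcut_def using assms finite_subset
    by (simp add: sum.distrib sum.cartesian_product)
  finally show ?thesis .
qed

lemma gvol_complement:
  assumes "finite U" "B \<subseteq> U"
  shows "gvol U m U = gvol U m B + gvol U m (U - B)"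
  unfolding gvol_def using assms by (metis add.commute sum.subset_diff)

lemma gvol_nonneg: "(\<And>x y. 0 \<le> m x y) \<Longrightarrow> 0 \<le> gvol U m B"
  unfolding gvol_def gdeg_def by (simp add: sum_nonneg)

lemma gcut_nonneg: "(\<And>x y. 0 \<le> m x y) \<Longrightarrow> 0 \<le> gcut m B C"
  unfolding gcut_def by (simp add: sum_nonneg split_beta)

lemma cheeger_le:
  assumes "finite U" "B \<noteq> {}" "B \<subset> U"
  shows "cheeger U m \<le> gcut m B (U - B) * gvol U m U / (gvol U m B * gvol U m (U - B))"
proof -
  let ?h = "\<lambda>B. gcut m B (U - B) * gvol U m U / (gvol U m B * gvol U m (U - B))"
  have "{?h B | B. B \<noteq> {} \<and> B \<subset> U} \<subseteq> ?h ` Pow U" by blast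
  moreover have "finite (?h ` Pow U)" using assms(1) by simp
  ultimately have "finite {?h B | B. B \<noteq> {} \<and> B \<subset> U}" by (rule finite_subset)
  moreover have "?h B \<in> {?h B | B. B \<noteq> {} \<and> B \<subset> U}" using assms(2,3) by blast
  ultimately show ?thesis unfolding cheeger_def by (rule Min_le)
qed

lemma expander_internal_weight_le:
  fixes m :: "'a \<Rightarrow> 'a \<Rightarrow> real"
  assumes fin: "finite U" and nn: "\<And>x y. 0 \<le> m x y" and ex: "expander U m lam"
    and lam: "0 \<le> lam" "lam < 1" and BU: "B \<subseteq> U"
  shows "(\<Sum>x\<in>B. \<Sum>y\<in>B. m x y) \<le> gvol U m B * (lam + gvol U m B / gvol U m U)"
proof -
  let ?I = "\<Sum>x\<in>B. \<Sum>y\<in>B. m x y" and ?c = "gcut m B (U - B)"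
  let ?vB = "gvol U m B" and ?vU = "gvol U m U" and ?vC = "gvol U m (U - B)"
  have split: "?vB = ?I + ?c" by (rule gvol_eq_internal_plus_cut[OF fin BU])
  have vU: "?vU = ?vB + ?vC" by (rule gvol_complement[OF fin BU])
  have nonneg: "0 \<le> ?vB" "0 \<le> ?vC" "0 \<le> ?c"
    using gvol_nonneg[of m, OF nn] gcut_nonneg[of m, OF nn] by auto
  consider "B = {}" | "B = U" | "B \<noteq> {}" "B \<subset> U" using BU by blast
  then show ?thesis
  proof cases
    case 1
    then show ?thesis by (simp add: gvol_def)
  next
    case 2
    then have "?I = ?vB" using split by (simp add: gcut_def)
    then show ?thesis using 2 nonneg lam by (cases "?vU = 0") (simp_all add: algebra_simps)
  next
    case 3
    have ratio: "1 - lam \<le> ?c * ?vU / (?vB * ?vC)"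
      using cheeger_le[OF fin 3, of m] ex unfolding expander_def by linarith
    then have "?vB * ?vC \<noteq> 0" using lam by auto
    then have pos: "0 < ?vB * ?vC" using nonneg by (simp add: less_le)
    then have vU_pos: "0 < ?vU" using nonneg vU by (auto simp: zero_less_mult_iff)
    from ratio pos have cut: "(1 - lam) * (?vB * ?vC) \<le> ?c * ?vU"
      by (simp add: pos_le_divide_eq)
    have "?I * ?vU = ?vB * ?vU - ?c * ?vU" using split by (simp add: algebra_simps)
    also have "\<dots> \<le> ?vB * (lam * ?vU + (1 - lam) * ?vB)"
      using cut vU by (simp add: algebra_simps)
    also have "\<dots> \<le> ?vB * (lam * ?vU + ?vB)"
      using nonneg lam by (intro mult_left_mono) (simp_all add: mult_left_le_one_le)
    finally show ?thesis using vU_pos by (simp add: field_simps)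
  qed
qed

section \<open>Real inequalities\<close>

lemma dyadic_approx_le:
  fixes x b :: real
  assumes "0 \<le> x" "x \<le> b"
  shows "x \<le> b / 2 ^ J + (\<Sum>i\<in>{1..J}. (b / 2 ^ i) * (if b / 2 ^ i \<le> x then 1 else 0))"
proof (induction J)
  case 0
  then show ?case using assms by simp
next
  case (Suc J)
  have "0 \<le> (\<Sum>i\<in>{1..J}. (b / 2 ^ i) * (if b / 2 ^ i \<le> x then 1 else 0))"
    using assms by (intro sum_nonneg) simp
  moreover have "b / 2 ^ J = 2 * (b / 2 ^ Suc J)" by simp
  ultimately show ?case using Suc.IH by (simp add: sum.cl_ivl_Suc)
qed

lemma sum_le_dyadic_counts:
  fixes y :: "'a \<Rightarrow> real"
  assumes "finite S" "\<And>v. v \<in> S \<Longrightarrow> 0 \<le> y v" "\<And>v. v \<in> S \<Longrightarrow> y v \<le> b"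
  shows "(\<Sum>v\<in>S. y v)
    \<le> real (card S) * (b / 2 ^ J) + (\<Sum>i\<in>{1..J}. (b / 2 ^ i) * real (card {v\<in>S. b / 2 ^ i \<le> y v}))"
proof -
  have "(\<Sum>v\<in>S. y v)
      \<le> (\<Sum>v\<in>S. b / 2 ^ J + (\<Sum>i\<in>{1..J}. (b / 2 ^ i) * (if b / 2 ^ i \<le> y v then 1 else 0)))"
    using assms by (intro sum_mono dyadic_approx_le) auto
  also have "\<dots> = real (card S) * (b / 2 ^ J)
      + (\<Sum>i\<in>{1..J}. \<Sum>v\<in>S. (b / 2 ^ i) * (if b / 2 ^ i \<le> y v then 1 else 0))"
    by (subst sum.swap) (simp add: sum.distrib)
  also have "\<dots> = real (card S) * (b / 2 ^ J)
      + (\<Sum>i\<in>{1..J}. (b / 2 ^ i) * real (card {v\<in>S. b / 2 ^ i \<le> y v}))"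
    using assms(1) sum.inter_filter[of S "\<lambda>_. 1::real"]
    by (simp add: sum_distrib_left sum_divide_distrib)
  finally show ?thesis .
qed

text \<open>Remove a vertex of maximal level, chosen outside \<open>L\<close> when possible: each remaining
  level is rounded up dyadically, and the removed vertex accounts for the \<open>- 1\<close> in every
  level count.\<close>

lemma sum_le_dyadic_level_counts:
  fixes y :: "'a \<Rightarrow> real"
  assumes fin: "finite \<tau>" and ne: "\<tau> \<noteq> {}"
    and y0: "\<And>v. v \<in> \<tau> \<Longrightarrow> 0 \<le> y v" and yb: "\<And>v. v \<in> \<tau> \<Longrightarrow> y v \<le> b"
    and y_top: "\<And>v. v \<in> \<tau> \<Longrightarrow> v \<notin> L \<Longrightarrow> y v = b"
  shows "(\<Sum>v\<in>\<tau> \<inter> L. y v) \<le> b * (if \<tau> \<subseteq> L then 1 else 0) + real (card \<tau> - 1) * (b / 2 ^ J)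
          + (\<Sum>i\<in>{1..J}. (b / 2 ^ i) * real (card {v\<in>\<tau>. b / 2 ^ i \<le> y v} - 1))"
proof -
  obtain v0 where v0: "v0 \<in> \<tau>" and v0_max: "\<And>v. v \<in> \<tau> \<Longrightarrow> y v \<le> y v0"
    and v0_out: "\<not> \<tau> \<subseteq> L \<Longrightarrow> v0 \<notin> L"
  proof (cases "\<tau> \<subseteq> L")
    case True
    have "Max (y ` \<tau>) \<in> y ` \<tau>" using fin ne by simp
    then obtain v0 where "v0 \<in> \<tau>" "y v0 = Max (y ` \<tau>)" by (metis imageE)
    then show ?thesis using that True fin by simp
  next
    case False
    then obtain v0 where "v0 \<in> \<tau>" "v0 \<notin> L" by blast
    then show ?thesis using that yb y_top by simp
  qed
  have b0: "0 \<le> b" using y0[OF v0] yb[OF v0] by linarith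
  have drop_v0: "(\<Sum>v\<in>\<tau> \<inter> L. y v) \<le> b * (if \<tau> \<subseteq> L then 1 else 0) + (\<Sum>v\<in>\<tau> - {v0}. y v)"
  proof (cases "\<tau> \<subseteq> L")
    case True
    then have "(\<Sum>v\<in>\<tau> \<inter> L. y v) = y v0 + (\<Sum>v\<in>\<tau> - {v0}. y v)"
      using fin v0 by (simp add: Int_absorb2 sum.remove)
    then show ?thesis using True yb[OF v0] by simp
  next
    case False
    then have "\<tau> \<inter> L \<subseteq> \<tau> - {v0}" using v0_out by blast
    then have "(\<Sum>v\<in>\<tau> \<inter> L. y v) \<le> (\<Sum>v\<in>\<tau> - {v0}. y v)"
      using fin y0 by (intro sum_mono2) auto
    then show ?thesis using False by simp
  qed
  have count_le: "card {v\<in>\<tau> - {v0}. t \<le> y v} \<le> card {v\<in>\<tau>. t \<le> y v} - 1" for t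
  proof (cases "t \<le> y v0")
    case True
    then have "{v\<in>\<tau> - {v0}. t \<le> y v} = {v\<in>\<tau>. t \<le> y v} - {v0}" "v0 \<in> {v\<in>\<tau>. t \<le> y v}"
      using v0 by auto
    then show ?thesis using fin by simp
  next
    case False
    then have empty: "{v\<in>\<tau> - {v0}. t \<le> y v} = {}" using v0_max by (blast intro: order_trans)
    show ?thesis unfolding empty by simp
  qed
  have "(\<Sum>v\<in>\<tau> - {v0}. y v) \<le> real (card \<tau> - 1) * (b / 2 ^ J)
      + (\<Sum>i\<in>{1..J}. (b / 2 ^ i) * real (card {v\<in>\<tau> - {v0}. b / 2 ^ i \<le> y v}))"
    using sum_le_dyadic_counts[of "\<tau> - {v0}" y b J] fin v0 y0 yb by (simp add: card_Diff_singleton)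
  also have "\<dots> \<le> real (card \<tau> - 1) * (b / 2 ^ J)
      + (\<Sum>i\<in>{1..J}. (b / 2 ^ i) * real (card {v\<in>\<tau>. b / 2 ^ i \<le> y v} - 1))"
    using count_le b0 by (intro add_left_mono sum_mono mult_left_mono) simp_all
  finally show ?thesis using drop_v0 by linarith
qed

lemma weighted_Cauchy_Schwarz:
  fixes p x :: "'a \<Rightarrow> real"
  assumes "\<And>i. i \<in> I \<Longrightarrow> 0 \<le> p i"
  shows "(\<Sum>i\<in>I. p i * x i)\<^sup>2 \<le> (\<Sum>i\<in>I. p i) * (\<Sum>i\<in>I. p i * (x i)\<^sup>2)"
  using Cauchy_Schwarz_ineq_sum[of "\<lambda>i. sqrt (p i)" "\<lambda>i. sqrt (p i) * x i" I] assms
  by (simp add: power_mult_distrib mult.assoc[symmetric] cong: sum.cong)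

text \<open>The Cauchy-Schwarz hypothesis \<open>CS\<close> first bounds \<open>N\<close> linearly in \<open>wA\<close>, which turns the
  quadratic bound on \<open>P\<close> into a linear one.\<close>

lemma pair_count_bootstrap:
  fixes wA N P m Q :: real
  assumes wA: "0 < wA" and N0: "0 \<le> N" and m0: "0 \<le> m" and m1: "m \<le> 1/100"
    and Q0: "0 \<le> Q" and Q1: "Q * wA \<le> 1/4"
    and P_le: "P \<le> m * N + Q * N\<^sup>2" and CS: "N\<^sup>2 \<le> wA * (P + N)"
  shows "P \<le> (27/20 * m + 91/50 * (Q * wA)) * wA"
proof -
  have N_le: "N \<le> 101/75 * wA"
  proof (cases "N = 0")
    case False
    have "wA * (P + N) \<le> wA * (m * N + Q * N\<^sup>2 + N)" using P_le wA by simp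
    then have "N\<^sup>2 \<le> wA * (m * N + Q * N\<^sup>2 + N)" using CS by linarith
    then have "N * N \<le> N * (wA * (m + 1) + (Q * wA) * N)"
      by (simp add: power2_eq_square algebra_simps)
    then have "N \<le> wA * (m + 1) + (Q * wA) * N" using False N0 by simp
    also have "\<dots> \<le> wA * (101/100) + (1/4) * N"
      using wA m1 Q1 N0 by (intro add_mono mult_left_mono mult_right_mono) simp_all
    finally show ?thesis by simp
  qed (use wA in simp)
  have "P \<le> m * N + Q * N\<^sup>2" by (rule P_le)
  also have "\<dots> \<le> m * (101/75 * wA) + Q * (101/75 * wA)\<^sup>2"
    using m0 Q0 N0 N_le by (intro add_mono mult_left_mono power_mono) simp_all
  also have "\<dots> = (101/75 * m + 10201/5625 * (Q * wA)) * wA"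
    by (simp add: power2_eq_square algebra_simps)
  also have "\<dots> \<le> (27/20 * m + 91/50 * (Q * wA)) * wA"
    using wA m0 Q0 by (intro mult_right_mono add_mono) simp_all
  finally show ?thesis .
qed

lemma exists_dyadic_scale:
  fixes b g :: real
  assumes "0 \<le> g"
  shows "\<exists>J\<le>M. b / 2 ^ J \<le> max (2 * g) (b / 2 ^ M) \<and> (0 < J \<longrightarrow> g \<le> b / 2 ^ J)"
proof (cases "g \<le> b / 2 ^ M")
  case True
  then show ?thesis by (intro exI[of _ M]) simp
next
  case False
  define J where "J = (LEAST j. b / 2 ^ j < 2 * g)"
  have below_M: "b / 2 ^ M < 2 * g" using False assms by simp
  have "J \<le> M" "b / 2 ^ J < 2 * g"
    unfolding J_def using below_M by (auto intro: Least_le LeastI)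
  moreover have "g \<le> b / 2 ^ J" if "0 < J"
  proof -
    have "\<not> b / 2 ^ (J - 1) < 2 * g"
      unfolding J_def by (rule not_less_Least) (use that J_def in simp)
    moreover have "b / 2 ^ (J - 1) = 2 * (b / 2 ^ J)" using that by (cases J) simp_all
    ultimately show ?thesis by simp
  qed
  ultimately show ?thesis by (intro exI[of _ J]) simp
qed

lemma real_pred_le_pairs: "real (n - 1) \<le> real n * (real n - 1) / 2"
proof (cases n)
  case (Suc m)
  have "real m \<le> real m * real m" by (cases m) simp_all
  then show ?thesis using Suc by (simp add: algebra_simps)
qed simp

lemma sum_two_powers_le: "(\<Sum>i\<in>{1..J}. (2::real) ^ i) \<le> 2 * 2 ^ J"
  by (induction J) (simp_all add: sum.cl_ivl_Suc)

lemma dyadic_density_sum_le: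
  fixes b C \<rho> :: real
  assumes b: "0 < b" and C: "0 < C" and \<rho>: "0 < \<rho>"
    and scale: "0 < J \<Longrightarrow> 2 * C * sqrt \<rho> \<le> b / 2 ^ J"
  shows "C\<^sup>2 * \<rho> / b * (\<Sum>i\<in>{1..J}. 2 ^ i) \<le> C * sqrt \<rho>"
proof (cases "J = 0")
  case False
  have "C\<^sup>2 * \<rho> / b * (\<Sum>i\<in>{1..J}. 2 ^ i) \<le> C\<^sup>2 * \<rho> / b * (2 * 2 ^ J)"
    using C \<rho> b sum_two_powers_le by (intro mult_left_mono) simp_all
  also have "\<dots> = 2 * (C\<^sup>2 * \<rho>) / (b / 2 ^ J)" by simp
  also have "\<dots> \<le> 2 * (C\<^sup>2 * \<rho>) / (2 * C * sqrt \<rho>)"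
    using scale False C \<rho> b by (intro divide_left_mono) simp_all
  also have "\<dots> = C * sqrt \<rho>"
    using C \<rho> by (simp add: power2_eq_square real_div_sqrt field_simps)
  finally show ?thesis .
qed (use C \<rho> in simp)

lemma sqrt_density_bound:
  fixes s k \<alpha> \<beta> \<rho> :: real
  assumes s: "2 \<le> s" and \<alpha>: "0 \<le> \<alpha>" "\<alpha> < 1" and \<beta>: "0 \<le> \<beta>" "\<beta> < 1" and k: "1 \<le> k"
    and \<rho>0: "0 \<le> \<rho>"
    and \<rho>: "\<rho> < 7 * (1 - \<alpha>)\<^sup>2 * (1 - \<beta>) ^ 3 / (64 * (1 + 15 * \<beta>) * s ^ 3 * (s - 1) ^ 4) * (1 / k\<^sup>2)"
  shows "k * (s - 1)\<^sup>2 * sqrt \<rho> \<le> 117/1000 * ((1 - \<alpha>) * (1 - \<beta>))"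
proof -
  define c where "c = (1 - \<alpha>) * (1 - \<beta>)"
  define C where "C = (s - 1)\<^sup>2"
  have C0: "0 < C" and c0: "0 < c" unfolding C_def c_def using s \<alpha> \<beta> by simp_all
  have num: "(1 - \<alpha>)\<^sup>2 * (1 - \<beta>) ^ 3 \<le> c\<^sup>2"
  proof -
    have "(1 - \<alpha>)\<^sup>2 * (1 - \<beta>) ^ 3 = c\<^sup>2 * (1 - \<beta>)"
      unfolding c_def by (simp add: power2_eq_square power3_eq_cube)
    also have "\<dots> \<le> c\<^sup>2" using \<beta> by (simp add: mult_left_le)
    finally show ?thesis .
  qed
  have "(2::real) ^ 3 \<le> s ^ 3" using s by (intro power_mono) simp_all
  then have "64 * 1 * 8 \<le> 64 * (1 + 15 * \<beta>) * s ^ 3" using \<beta> by (intro mult_mono) simp_all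
  moreover have "(s - 1) ^ 4 = C\<^sup>2" unfolding C_def by (simp flip: power_mult)
  ultimately have den: "512 * C\<^sup>2 \<le> 64 * (1 + 15 * \<beta>) * s ^ 3 * (s - 1) ^ 4"
    using C0 by (simp add: mult_right_mono)
  have "0 < 512 * C\<^sup>2" using C0 by simp
  then have den_pos: "0 < 64 * (1 + 15 * \<beta>) * s ^ 3 * (s - 1) ^ 4" using den by linarith
  have "\<rho> < 7 * (1 - \<alpha>)\<^sup>2 * (1 - \<beta>) ^ 3 / (64 * (1 + 15 * \<beta>) * s ^ 3 * (s - 1) ^ 4) / k\<^sup>2"
    using \<rho> by simp
  also have "\<dots> \<le> 7 * c\<^sup>2 / (64 * (1 + 15 * \<beta>) * s ^ 3 * (s - 1) ^ 4) / k\<^sup>2"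
    using num den_pos by (intro divide_right_mono) simp_all
  also have "\<dots> \<le> 7 * c\<^sup>2 / (512 * C\<^sup>2) / k\<^sup>2"
    using den C0 den_pos by (intro divide_right_mono divide_left_mono) simp_all
  finally have \<rho>_le: "\<rho> \<le> 7 * c\<^sup>2 / (512 * C\<^sup>2) / k\<^sup>2" by simp
  have "(k * C * sqrt \<rho>)\<^sup>2 = k\<^sup>2 * C\<^sup>2 * \<rho>" using \<rho>0 by (simp add: power_mult_distrib)
  also have "\<dots> \<le> k\<^sup>2 * C\<^sup>2 * (7 * c\<^sup>2 / (512 * C\<^sup>2) / k\<^sup>2)"
    using \<rho>_le by (intro mult_left_mono) simp_all
  also have "\<dots> \<le> (117/1000 * c)\<^sup>2" using k C0 by (simp add: field_simps power2_eq_square)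
  finally have "k * C * sqrt \<rho> \<le> 117/1000 * c"
    by (rule power2_le_imp_le) (use c0 in simp)
  then show ?thesis unfolding c_def C_def .
qed

section \<open>Weighted two layer systems\<close>

lemma real_card_Diff_singleton:
  assumes "finite X" "x \<in> X"
  shows "real (card (X - {x})) = real (card X) - 1"
proof -
  have "0 < card X" using assms card_gt_0_iff by blast
  then show ?thesis using assms by (simp add: card_Diff_singleton of_nat_diff)
qed

lemma sum_family_weights_swap:
  fixes f :: "'b \<Rightarrow> real"
  assumes "finite U" "finite F"
  shows "(\<Sum>y\<in>U. if R y then \<Sum>\<sigma>\<in>{\<sigma>\<in>F. P \<sigma> \<and> Q y \<sigma>}. f \<sigma> else 0)
       = (\<Sum>\<sigma>\<in>{\<sigma>\<in>F. P \<sigma>}. f \<sigma> * real (card {y\<in>U. R y \<and> Q y \<sigma>}))"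
proof -
  have "{\<sigma>\<in>{\<sigma>\<in>F. P \<sigma>}. Q y \<sigma>} = {\<sigma>\<in>F. P \<sigma> \<and> Q y \<sigma>}" for y by blast
  then have "(\<Sum>y\<in>U. if R y then \<Sum>\<sigma>\<in>{\<sigma>\<in>F. P \<sigma> \<and> Q y \<sigma>}. f \<sigma> else 0)
      = (\<Sum>y\<in>{y\<in>U. R y}. \<Sum>\<sigma>\<in>{\<sigma>\<in>{\<sigma>\<in>F. P \<sigma>}. Q y \<sigma>}. f \<sigma>)"
    by (simp add: sum.inter_filter[OF assms(1)])
  also have "\<dots> = (\<Sum>\<sigma>\<in>{\<sigma>\<in>F. P \<sigma>}. \<Sum>y\<in>{y\<in>{y\<in>U. R y}. Q y \<sigma>}. f \<sigma>)"
    using assms by (intro sum.swap_restrict) simp_all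
  also have "\<dots> = (\<Sum>\<sigma>\<in>{\<sigma>\<in>F. P \<sigma>}. f \<sigma> * real (card {y\<in>U. R y \<and> Q y \<sigma>}))"
    by (simp add: mult.commute conj_commute conj_left_commute)
  finally show ?thesis .
qed

lemma nint_has_edges_if_Qnint_pos:
  assumes "\<sigma> \<in> T" "\<tau> \<in> \<sigma>" "\<tau> \<noteq> {}" "0 < Qnint \<tau> \<sigma>"
  shows "nint_has_edges T"
proof -
  have "{\<tau>'\<in>\<sigma>. \<tau> \<inter> \<tau>' = {}} \<noteq> {}" using assms(4) unfolding Qnint_def by force
  then obtain \<tau>' where "\<tau>' \<in> \<sigma>" "\<tau> \<inter> \<tau>' = {}" by blast
  then show ?thesis unfolding nint_has_edges_def using assms(1-3) by blast
qed

locale weighted_two_layer_system =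
  fixes s k K :: nat and V :: "'v set" and E :: "'v set set" and T :: "'v set set set"
    and w :: "'v set set \<Rightarrow> real"
  assumes two_layer: "two_layer_system s k K V E T" and w_pos: "\<And>\<sigma>. \<sigma> \<in> T \<Longrightarrow> 0 < w \<sigma>"
begin

lemma finite_V: "finite V"
  and face_subset_V: "\<tau> \<in> E \<Longrightarrow> \<tau> \<subseteq> V"
  and card_face: "\<tau> \<in> E \<Longrightarrow> card \<tau> = k"
  and Union_E: "\<Union>E = V"
  and top_subset_E: "\<sigma> \<in> T \<Longrightarrow> \<sigma> \<subseteq> E"
  and card_top: "\<sigma> \<in> T \<Longrightarrow> card \<sigma> = K"
  and Union_T: "\<Union>T = E"
  and face_count_bounds: "\<sigma> \<in> T \<Longrightarrow> v \<in> \<Union>\<sigma> \<Longrightarrow>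
         2 \<le> card {\<tau>\<in>\<sigma>. v \<in> \<tau>} \<and> card {\<tau>\<in>\<sigma>. v \<in> \<tau>} \<le> s"
  using two_layer unfolding two_layer_system_def by auto

lemma finite_E: "finite E"
  by (rule finite_subset[of E "Pow V"]) (use face_subset_V finite_V in auto)

lemma finite_T: "finite T"
  by (rule finite_subset[of T "Pow E"]) (use top_subset_E finite_E in auto)

lemma finite_face: "\<tau> \<in> E \<Longrightarrow> finite \<tau>"
  using face_subset_V finite_V finite_subset by blast

lemma finite_top: "\<sigma> \<in> T \<Longrightarrow> finite \<sigma>"
  using top_subset_E finite_E finite_subset by blast

lemma finite_Ev: "finite (Ev E v)"
  unfolding Ev_def using finite_E by simp

lemma face_nonempty: "1 \<le> k \<Longrightarrow> \<tau> \<in> E \<Longrightarrow> \<tau> \<noteq> {}"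
  using card_face by fastforce

abbreviation wt :: "'v set \<Rightarrow> real" where "wt \<equiv> wE T w"

lemma wE_nonneg: "0 \<le> wt \<tau>"
  unfolding wE_def by (intro sum_nonneg) (simp add: w_pos less_imp_le)

lemma wE_pos: assumes "\<tau> \<in> E" shows "0 < wt \<tau>"
proof -
  obtain \<sigma> where \<sigma>: "\<sigma> \<in> T" "\<tau> \<in> \<sigma>" using assms Union_T by blast
  then have "w \<sigma> \<le> wt \<tau>"
    unfolding wE_def using finite_T w_pos by (intro member_le_sum) (auto simp: less_imp_le)
  then show ?thesis using w_pos[OF \<sigma>(1)] by simp
qed

lemma wSet_nonneg: "0 \<le> wSet T w A"
  unfolding wSet_def by (simp add: sum_nonneg wE_nonneg)

lemma wSet_pos: "A \<subseteq> E \<Longrightarrow> A \<noteq> {} \<Longrightarrow> 0 < wSet T w A"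
  unfolding wSet_def using finite_E wE_pos wE_nonneg
  by (metis finite_subset subset_iff sum_pos2 equals0I)

lemma wSet_mono: "A \<subseteq> B \<Longrightarrow> B \<subseteq> E \<Longrightarrow> wSet T w A \<le> wSet T w B"
  unfolding wSet_def using finite_E finite_subset wE_nonneg by (metis sum_mono2)

lemma wSet_Ev_pos: "v \<in> V \<Longrightarrow> 0 < wSet T w (Ev E v)"
  using Union_E by (intro wSet_pos) (auto simp: Ev_def)

lemma link_w_nonneg: "0 \<le> link_w T w x y"
  unfolding link_w_def by (auto intro!: sum_nonneg simp: w_pos less_imp_le)

lemma nint_w_nonneg: "0 \<le> nint_w T w x y"
  unfolding nint_w_def by (auto intro!: sum_nonneg simp: w_pos less_imp_le)

lemma ground_w_nonneg: "0 \<le> ground_w E T w x y"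
  unfolding ground_w_def by (auto intro!: sum_nonneg simp: wE_nonneg)

lemma sum_vertices_faces_swap:
  assumes "A \<subseteq> E" "S \<subseteq> V"
  shows "(\<Sum>v\<in>S. \<Sum>\<tau>\<in>A \<inter> Ev E v. g v \<tau>) = (\<Sum>\<tau>\<in>A. \<Sum>v\<in>\<tau> \<inter> S. g v \<tau>)"
proof -
  have fin: "finite S" "finite A" using assms finite_V finite_E finite_subset by blast+
  have "A \<inter> Ev E v = {\<tau>\<in>A. v \<in> \<tau>}" for v using assms(1) unfolding Ev_def by blast
  moreover have "\<tau> \<inter> S = {v\<in>S. v \<in> \<tau>}" for \<tau> by blast
  ultimately show ?thesis using sum.swap_restrict[OF fin] by simp
qed

lemma sum_wSet_Ev:
  assumes "A \<subseteq> E" "S \<subseteq> V"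
  shows "(\<Sum>v\<in>S. wSet T w (A \<inter> Ev E v)) = (\<Sum>\<tau>\<in>A. wt \<tau> * real (card (\<tau> \<inter> S)))"
  unfolding wSet_def sum_vertices_faces_swap[OF assms] by (simp add: mult.commute)

lemma sum_wSet_Ev_V:
  assumes "A \<subseteq> E"
  shows "(\<Sum>v\<in>V. wSet T w (A \<inter> Ev E v)) = real k * wSet T w A"
proof -
  have "\<tau> \<inter> V = \<tau>" "card \<tau> = k" if "\<tau> \<in> A" for \<tau>
    using that assms face_subset_V card_face by blast+
  then show ?thesis
    unfolding sum_wSet_Ev[OF assms order_refl]
    by (simp add: wSet_def sum_distrib_left mult.commute)
qed

lemma link_degree_eq:
  assumes "v \<in> \<tau>"
  shows "gdeg (Ev E v) (link_w T w) \<tau> = (\<Sum>\<sigma>\<in>{\<sigma>\<in>T. \<tau> \<in> \<sigma>}. w \<sigma> * (real (card {\<tau>'\<in>\<sigma>. v \<in> \<tau>'}) - 1))"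
proof -
  have "real (card {\<tau>'\<in>Ev E v. \<tau> \<noteq> \<tau>' \<and> \<tau>' \<in> \<sigma>}) = real (card {\<tau>'\<in>\<sigma>. v \<in> \<tau>'}) - 1"
    if "\<sigma> \<in> T" "\<tau> \<in> \<sigma>" for \<sigma>
  proof -
    have "{\<tau>'\<in>Ev E v. \<tau> \<noteq> \<tau>' \<and> \<tau>' \<in> \<sigma>} = {\<tau>'\<in>\<sigma>. v \<in> \<tau>'} - {\<tau>}"
      using top_subset_E[OF that(1)] unfolding Ev_def by blast
    moreover have "\<tau> \<in> {\<tau>'\<in>\<sigma>. v \<in> \<tau>'}" "finite {\<tau>'\<in>\<sigma>. v \<in> \<tau>'}"
      using that assms finite_top by auto
    ultimately show ?thesis by (simp only: real_card_Diff_singleton)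
  qed
  then show ?thesis
    unfolding gdeg_def link_w_def sum_family_weights_swap[OF finite_Ev finite_T]
    by (intro sum.cong) simp_all
qed

lemma link_degree_bounds:
  assumes "v \<in> \<tau>"
  shows "wt \<tau> \<le> gdeg (Ev E v) (link_w T w) \<tau>"
    and "gdeg (Ev E v) (link_w T w) \<tau> \<le> (real s - 1) * wt \<tau>"
proof -
  have count: "1 \<le> real (card {\<tau>'\<in>\<sigma>. v \<in> \<tau>'}) - 1 \<and> real (card {\<tau>'\<in>\<sigma>. v \<in> \<tau>'}) - 1 \<le> real s - 1"
    if "\<sigma> \<in> T" "\<tau> \<in> \<sigma>" for \<sigma>
    using face_count_bounds[OF that(1), of v] that assms by force
  show "wt \<tau> \<le> gdeg (Ev E v) (link_w T w) \<tau>"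
    unfolding link_degree_eq[OF assms] wE_def
    using count w_pos by (intro sum_mono) (simp add: less_imp_le)
  have "gdeg (Ev E v) (link_w T w) \<tau> \<le> (\<Sum>\<sigma>\<in>{\<sigma>\<in>T. \<tau> \<in> \<sigma>}. w \<sigma> * (real s - 1))"
    unfolding link_degree_eq[OF assms]
    using count w_pos by (intro sum_mono mult_left_mono) (simp_all add: less_imp_le)
  then show "gdeg (Ev E v) (link_w T w) \<tau> \<le> (real s - 1) * wt \<tau>"
    unfolding wE_def by (simp add: sum_distrib_left mult.commute)
qed

lemma link_vol_bounds:
  assumes "A \<subseteq> E"
  shows "wSet T w (A \<inter> Ev E v) \<le> link_vol E T w v (A \<inter> Ev E v)"
    and "link_vol E T w v (A \<inter> Ev E v) \<le> (real s - 1) * wSet T w (A \<inter> Ev E v)"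
proof -
  have v_in: "v \<in> \<tau>" if "\<tau> \<in> A \<inter> Ev E v" for \<tau> using that unfolding Ev_def by auto
  show "wSet T w (A \<inter> Ev E v) \<le> link_vol E T w v (A \<inter> Ev E v)"
    unfolding wSet_def link_vol_def gvol_def
    using link_degree_bounds(1)[OF v_in] by (intro sum_mono) blast
  show "link_vol E T w v (A \<inter> Ev E v) \<le> (real s - 1) * wSet T w (A \<inter> Ev E v)"
    unfolding wSet_def link_vol_def gvol_def sum_distrib_left
    using link_degree_bounds(2)[OF v_in] by (intro sum_mono) blast
qed

lemma wSet_Ev_le_link_vol: "wSet T w (Ev E v) \<le> link_vol E T w v (Ev E v)"
  using link_vol_bounds(1)[of E v] by (simp add: Ev_def Int_absorb1)

lemma nint_degree_eq:
  assumes "\<tau> \<noteq> {}"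
  shows "gdeg E (nint_w T w) \<tau> = (\<Sum>\<sigma>\<in>{\<sigma>\<in>T. \<tau> \<in> \<sigma>}. w \<sigma> * real (Qnint \<tau> \<sigma>))"
proof -
  have "{\<tau>'\<in>E. (\<tau> \<noteq> \<tau>' \<and> \<tau> \<inter> \<tau>' = {}) \<and> \<tau>' \<in> \<sigma>} = {\<tau>'\<in>\<sigma>. \<tau> \<inter> \<tau>' = {}}" if "\<sigma> \<in> T" for \<sigma>
    using top_subset_E[OF that] assms by blast
  then show ?thesis
    unfolding gdeg_def nint_w_def sum_family_weights_swap[OF finite_E finite_T] Qnint_def
    by (intro sum.cong) simp_all
qed

lemma nint_degree_bounds:
  assumes "\<tau> \<noteq> {}"
    and lo: "\<And>\<sigma>. \<sigma> \<in> T \<Longrightarrow> \<tau> \<in> \<sigma> \<Longrightarrow> a \<le> real (Qnint \<tau> \<sigma>)"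
    and hi: "\<And>\<sigma>. \<sigma> \<in> T \<Longrightarrow> \<tau> \<in> \<sigma> \<Longrightarrow> real (Qnint \<tau> \<sigma>) \<le> b"
  shows "a * wt \<tau> \<le> gdeg E (nint_w T w) \<tau>" and "gdeg E (nint_w T w) \<tau> \<le> b * wt \<tau>"
proof -
  have "(\<Sum>\<sigma>\<in>{\<sigma>\<in>T. \<tau> \<in> \<sigma>}. w \<sigma> * a) \<le> (\<Sum>\<sigma>\<in>{\<sigma>\<in>T. \<tau> \<in> \<sigma>}. w \<sigma> * real (Qnint \<tau> \<sigma>))"
    using lo w_pos by (intro sum_mono mult_left_mono) (simp_all add: less_imp_le)
  then show "a * wt \<tau> \<le> gdeg E (nint_w T w) \<tau>"
    unfolding nint_degree_eq[OF assms(1)] wE_def by (simp add: sum_distrib_left mult.commute)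
  have "(\<Sum>\<sigma>\<in>{\<sigma>\<in>T. \<tau> \<in> \<sigma>}. w \<sigma> * real (Qnint \<tau> \<sigma>)) \<le> (\<Sum>\<sigma>\<in>{\<sigma>\<in>T. \<tau> \<in> \<sigma>}. w \<sigma> * b)"
    using hi w_pos by (intro sum_mono mult_left_mono) (simp_all add: less_imp_le)
  then show "gdeg E (nint_w T w) \<tau> \<le> b * wt \<tau>"
    unfolding nint_degree_eq[OF assms(1)] wE_def by (simp add: sum_distrib_left mult.commute)
qed

lemma ground_row_sum_eq:
  assumes "S \<subseteq> V"
  shows "(\<Sum>v\<in>S. ground_w E T w u v) = (\<Sum>\<tau>\<in>{\<tau>\<in>E. u \<in> \<tau>}. wt \<tau> * real (card (\<tau> \<inter> S - {u})))"
proof -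
  have fin: "finite S" using assms finite_V finite_subset by blast
  have "{v\<in>S. u \<noteq> v \<and> v \<in> \<tau>} = \<tau> \<inter> S - {u}" for \<tau> by blast
  then show ?thesis
    unfolding ground_w_def sum_family_weights_swap[OF fin finite_E] by simp
qed

lemma ground_degree_eq:
  assumes "u \<in> V"
  shows "gdeg V (ground_w E T w) u = (real k - 1) * wSet T w (Ev E u)"
proof -
  have "real (card (\<tau> \<inter> V - {u})) = real k - 1" if "\<tau> \<in> E" "u \<in> \<tau>" for \<tau>
  proof -
    have "\<tau> \<inter> V - {u} = \<tau> - {u}" using face_subset_V[OF that(1)] by blast
    then show ?thesis
      using that card_face[OF that(1)] finite_face[OF that(1)] by (simp only: real_card_Diff_singleton)
  qed
  then show ?thesis
    unfolding gdeg_def ground_row_sum_eq[OF order_refl] wSet_def Ev_def sum_distrib_left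
    by (intro sum.cong) simp_all
qed

lemma ground_internal_weight_eq:
  assumes "S \<subseteq> V"
  shows "(\<Sum>u\<in>S. \<Sum>v\<in>S. ground_w E T w u v)
       = (\<Sum>\<tau>\<in>E. wt \<tau> * (real (card (\<tau> \<inter> S)) * (real (card (\<tau> \<inter> S)) - 1)))"
proof -
  have fin: "finite S" using assms finite_V finite_subset by blast
  have "(\<Sum>u\<in>S. \<Sum>v\<in>S. ground_w E T w u v)
      = (\<Sum>u\<in>S. \<Sum>\<tau>\<in>{\<tau>\<in>E. u \<in> \<tau>}. wt \<tau> * real (card (\<tau> \<inter> S - {u})))"
    unfolding ground_row_sum_eq[OF assms] ..
  also have "\<dots> = (\<Sum>\<tau>\<in>E. \<Sum>u\<in>{u\<in>S. u \<in> \<tau>}. wt \<tau> * real (card (\<tau> \<inter> S - {u})))"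
    using fin finite_E by (rule sum.swap_restrict)
  also have "\<dots> = (\<Sum>\<tau>\<in>E. wt \<tau> * (real (card (\<tau> \<inter> S)) * (real (card (\<tau> \<inter> S)) - 1)))"
  proof (intro sum.cong refl)
    fix \<tau>
    have "{u\<in>S. u \<in> \<tau>} = \<tau> \<inter> S" by blast
    moreover have "real (card (\<tau> \<inter> S - {u})) = real (card (\<tau> \<inter> S)) - 1" if "u \<in> \<tau> \<inter> S" for u
      using that fin by (intro real_card_Diff_singleton) auto
    ultimately show "(\<Sum>u\<in>{u\<in>S. u \<in> \<tau>}. wt \<tau> * real (card (\<tau> \<inter> S - {u})))
        = wt \<tau> * (real (card (\<tau> \<inter> S)) * (real (card (\<tau> \<inter> S)) - 1))"
      by (simp add: mult.commute)
  qed
  finally show ?thesis .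
qed

lemma ground_gvol_eq:
  assumes "S \<subseteq> V"
  shows "gvol V (ground_w E T w) S = (real k - 1) * (\<Sum>u\<in>S. wSet T w (Ev E u))"
  unfolding gvol_def sum_distrib_left using assms ground_degree_eq by (intro sum.cong) auto

lemma ground_gvol_V: "gvol V (ground_w E T w) V = (real k - 1) * (real k * wSet T w E)"
proof -
  have "(\<Sum>u\<in>V. wSet T w (Ev E u)) = (\<Sum>u\<in>V. wSet T w (E \<inter> Ev E u))"
    by (simp add: Ev_def Int_absorb1)
  then show ?thesis unfolding ground_gvol_eq[OF order_refl] sum_wSet_Ev_V[OF order_refl] by simp
qed

text \<open>Without unique neighbours, every top face through \<open>\<tau> \<in> A\<close> contains a second face
  of \<open>A\<close>, which is joined to \<open>\<tau>\<close> either in the non-intersecting graph or in the link of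
  a common vertex.\<close>

lemma face_weight_le_partners:
  assumes A: "A \<subseteq> E" and \<tau>: "\<tau> \<in> A" and no_unique: "\<forall>\<sigma>\<in>T. card (A \<inter> \<sigma>) \<noteq> 1"
  shows "wt \<tau> \<le> (\<Sum>\<tau>'\<in>A. nint_w T w \<tau> \<tau>') + (\<Sum>v\<in>\<tau>. \<Sum>\<tau>'\<in>A \<inter> Ev E v. link_w T w \<tau> \<tau>')"
proof -
  have finA: "finite A" using A finite_E finite_subset by blast
  have \<tau>E: "\<tau> \<in> E" using A \<tau> by blast
  have partner: "1 \<le> real (card {\<tau>'\<in>A. \<tau> \<noteq> \<tau>' \<and> \<tau>' \<in> \<sigma>})"
    if \<sigma>: "\<sigma> \<in> T" "\<tau> \<in> \<sigma>" for \<sigma>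
  proof -
    have "A \<inter> \<sigma> \<noteq> {\<tau>}" using no_unique \<sigma> by force
    then obtain \<tau>' where "\<tau>' \<in> A" "\<tau>' \<in> \<sigma>" "\<tau>' \<noteq> \<tau>" using \<sigma> \<tau> by blast
    then have "{\<tau>'\<in>A. \<tau> \<noteq> \<tau>' \<and> \<tau>' \<in> \<sigma>} \<noteq> {}" by blast
    then show ?thesis using finA by (simp add: Suc_le_eq card_gt_0_iff)
  qed
  have "w \<sigma> \<le> w \<sigma> * real (card {\<tau>'\<in>A. \<tau> \<noteq> \<tau>' \<and> \<tau>' \<in> \<sigma>})" if "\<sigma> \<in> T" "\<tau> \<in> \<sigma>" for \<sigma>
    using mult_left_mono[OF partner[OF that] less_imp_le[OF w_pos[OF that(1)]]] by simp
  then have "wt \<tau> \<le> (\<Sum>\<sigma>\<in>{\<sigma>\<in>T. \<tau> \<in> \<sigma>}. w \<sigma> * real (card {\<tau>'\<in>A. \<tau> \<noteq> \<tau>' \<and> \<tau>' \<in> \<sigma>}))"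
    unfolding wE_def by (intro sum_mono) simp
  also have "\<dots> = (\<Sum>\<tau>'\<in>A. link_w T w \<tau> \<tau>')"
    unfolding link_w_def sum_family_weights_swap[OF finA finite_T] ..
  also have "\<dots> \<le> (\<Sum>\<tau>'\<in>A. nint_w T w \<tau> \<tau>' + real (card (\<tau>' \<inter> \<tau>)) * link_w T w \<tau> \<tau>')"
  proof (intro sum_mono)
    fix \<tau>' assume "\<tau>' \<in> A"
    show "link_w T w \<tau> \<tau>' \<le> nint_w T w \<tau> \<tau>' + real (card (\<tau>' \<inter> \<tau>)) * link_w T w \<tau> \<tau>'"
    proof (cases "\<tau>' \<inter> \<tau> = {}")
      case True
      then show ?thesis using link_w_nonneg by (simp add: link_w_def nint_w_def Int_commute)
    next
      case False
      then have "1 \<le> real (card (\<tau>' \<inter> \<tau>))"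
        using finite_face[OF \<tau>E] by (simp add: Suc_le_eq card_gt_0_iff)
      from mult_right_mono[OF this link_w_nonneg[of \<tau> \<tau>']]
      show ?thesis using nint_w_nonneg[of \<tau> \<tau>'] by simp
    qed
  qed
  also have "\<dots> = (\<Sum>\<tau>'\<in>A. nint_w T w \<tau> \<tau>') + (\<Sum>v\<in>\<tau>. \<Sum>\<tau>'\<in>A \<inter> Ev E v. link_w T w \<tau> \<tau>')"
    unfolding sum_vertices_faces_swap[OF A face_subset_V[OF \<tau>E]] by (simp add: sum.distrib)
  finally show ?thesis .
qed

lemma inner_faces_weight_le:
  assumes A: "A \<subseteq> E" and L: "L \<subseteq> V" and no_unique: "\<forall>\<sigma>\<in>T. card (A \<inter> \<sigma>) \<noteq> 1"
  shows "wSet T w {\<tau>\<in>A. \<tau> \<subseteq> L} \<le> (\<Sum>\<tau>\<in>A. \<Sum>\<tau>'\<in>A. nint_w T w \<tau> \<tau>')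
           + (\<Sum>v\<in>L. \<Sum>\<tau>\<in>A \<inter> Ev E v. \<Sum>\<tau>'\<in>A \<inter> Ev E v. link_w T w \<tau> \<tau>')"
proof -
  define N where "N \<tau> = (\<Sum>\<tau>'\<in>A. nint_w T w \<tau> \<tau>')" for \<tau>
  define G where "G v \<tau> = (\<Sum>\<tau>'\<in>A \<inter> Ev E v. link_w T w \<tau> \<tau>')" for v \<tau>
  have finA: "finite A" using A finite_E finite_subset by blast
  have N_nonneg: "0 \<le> N \<tau>" and G_nonneg: "0 \<le> G v \<tau>" for \<tau> v
    unfolding N_def G_def by (simp_all add: sum_nonneg nint_w_nonneg link_w_nonneg)
  have "wSet T w {\<tau>\<in>A. \<tau> \<subseteq> L} \<le> (\<Sum>\<tau>\<in>{\<tau>\<in>A. \<tau> \<subseteq> L}. N \<tau> + (\<Sum>v\<in>\<tau> \<inter> L. G v \<tau>))"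
    unfolding wSet_def N_def G_def using face_weight_le_partners[OF A _ no_unique]
    by (intro sum_mono) (simp add: Int_absorb2)
  also have "\<dots> \<le> (\<Sum>\<tau>\<in>A. N \<tau> + (\<Sum>v\<in>\<tau> \<inter> L. G v \<tau>))"
    using finA by (intro sum_mono2) (simp_all add: add_nonneg_nonneg sum_nonneg N_nonneg G_nonneg)
  also have "\<dots> = (\<Sum>\<tau>\<in>A. N \<tau>) + (\<Sum>v\<in>L. \<Sum>\<tau>\<in>A \<inter> Ev E v. G v \<tau>)"
    unfolding sum_vertices_faces_swap[OF A L] by (rule sum.distrib)
  finally show ?thesis unfolding N_def G_def .
qed

section \<open>Light vertices and dyadic levels\<close>

definition light :: "real \<Rightarrow> 'v set set \<Rightarrow> 'v set" where
  "light \<delta> A = {v\<in>V. \<not> delta_large E T w \<delta> A v}"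

text \<open>At light vertices the level dominates the density term of the mixing bound in the
  link; at large vertices it equals its cap.\<close>

definition level :: "real \<Rightarrow> 'v set set \<Rightarrow> 'v \<Rightarrow> real" where
  "level \<delta> A v = min ((real s - 1) * \<delta>)
     ((real s - 1)\<^sup>2 * (wSet T w (A \<inter> Ev E v) / wSet T w (Ev E v)))"

lemma light_subset: "light \<delta> A \<subseteq> V"
  unfolding light_def by blast

lemma level_nonneg: "1 \<le> s \<Longrightarrow> 0 \<le> \<delta> \<Longrightarrow> 0 \<le> level \<delta> A v"
  unfolding level_def by (simp add: wSet_nonneg)

lemma level_le: "level \<delta> A v \<le> (real s - 1) * \<delta>"
  unfolding level_def by simp

lemma level_mult_le:
  assumes "v \<in> V"
  shows "level \<delta> A v * wSet T w (Ev E v) \<le> (real s - 1)\<^sup>2 * wSet T w (A \<inter> Ev E v)"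
proof -
  have "level \<delta> A v \<le> (real s - 1)\<^sup>2 * wSet T w (A \<inter> Ev E v) / wSet T w (Ev E v)"
    unfolding level_def by simp
  then show ?thesis using wSet_Ev_pos[OF assms] by (simp add: le_divide_eq)
qed

lemma light_faces_weight_ge:
  assumes A: "A \<subseteq> E" and small: "locally_small V E T w \<delta> \<alpha> A"
  shows "(1 - \<alpha>) * wSet T w A \<le> wSet T w {\<tau>\<in>A. \<tau> \<subseteq> light \<delta> A}"
proof -
  let ?L = "light \<delta> A"
  have finA: "finite A" using A finite_E finite_subset by blast
  have "wSet T w (A - {\<tau>\<in>A. \<tau> \<subseteq> ?L}) \<le> (\<Sum>\<tau>\<in>A - {\<tau>\<in>A. \<tau> \<subseteq> ?L}. wt \<tau> * real (card (\<tau> \<inter> (V - ?L))))"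
    unfolding wSet_def
  proof (intro sum_mono)
    fix \<tau> assume \<tau>: "\<tau> \<in> A - {\<tau>\<in>A. \<tau> \<subseteq> ?L}"
    then have "\<tau> \<inter> (V - ?L) \<noteq> {}" "finite \<tau>" using A face_subset_V finite_face by blast+
    then have "1 \<le> real (card (\<tau> \<inter> (V - ?L)))" by (simp add: Suc_le_eq card_gt_0_iff)
    then show "wt \<tau> \<le> wt \<tau> * real (card (\<tau> \<inter> (V - ?L)))"
      using wE_nonneg[of \<tau>] by (simp add: mult_le_cancel_left1)
  qed
  also have "\<dots> \<le> (\<Sum>\<tau>\<in>A. wt \<tau> * real (card (\<tau> \<inter> (V - ?L))))"
    using finA wE_nonneg by (intro sum_mono2) simp_all
  also have "\<dots> = (\<Sum>v\<in>V - ?L. wSet T w (A \<inter> Ev E v))"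
    by (rule sum_wSet_Ev[OF A, symmetric]) blast
  also have "\<dots> \<le> (\<Sum>v\<in>V - ?L. link_vol E T w v (A \<inter> Ev E v))"
    using link_vol_bounds(1)[OF A] by (rule sum_mono)
  also have "\<dots> \<le> \<alpha> * wSet T w A"
  proof -
    have "V - ?L = {v\<in>V. delta_large E T w \<delta> A v}" unfolding light_def by blast
    then show ?thesis using small unfolding locally_small_def by simp
  qed
  finally show ?thesis
    using finA by (simp add: wSet_def sum.subset_diff[of "{\<tau>\<in>A. \<tau> \<subseteq> ?L}" A] algebra_simps)
qed

lemma level_at_large:
  assumes "A \<subseteq> E" "1 \<le> s" "v \<in> V" "v \<notin> light \<delta> A"
  shows "level \<delta> A v = (real s - 1) * \<delta>"
proof -
  let ?a = "wSet T w (A \<inter> Ev E v)" and ?W = "wSet T w (Ev E v)"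
  let ?M = "link_vol E T w v (A \<inter> Ev E v)" and ?D = "link_vol E T w v (Ev E v)"
  have W_pos: "0 < ?W" by (rule wSet_Ev_pos[OF assms(3)])
  have W_le: "?W \<le> ?D" by (rule wSet_Ev_le_link_vol)
  have "\<delta> \<le> ?M / ?D" using assms(3,4) unfolding light_def delta_large_def by simp
  also have "\<dots> \<le> (real s - 1) * ?a / ?D"
    using link_vol_bounds(2)[OF assms(1)] W_pos W_le by (simp add: divide_right_mono)
  also have "\<dots> \<le> (real s - 1) * ?a / ?W"
    using assms(2) W_pos W_le wSet_nonneg[of "A \<inter> Ev E v"] by (intro divide_left_mono) simp_all
  finally have "(real s - 1) * \<delta> \<le> (real s - 1) * ((real s - 1) * ?a / ?W)"
    using assms(2) by (intro mult_left_mono) simp_all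
  then have "(real s - 1) * \<delta> \<le> (real s - 1)\<^sup>2 * (?a / ?W)"
    by (simp add: power2_eq_square mult.assoc)
  then show ?thesis unfolding level_def by simp
qed

lemma link_internal_le_at_light:
  assumes A: "A \<subseteq> E" and s: "1 \<le> s" and v: "v \<in> light \<delta> A"
    and ex: "expander (Ev E v) (link_w T w) lam" and lam: "0 \<le> lam" "lam < 1"
  shows "(\<Sum>\<tau>\<in>A \<inter> Ev E v. \<Sum>\<tau>'\<in>A \<inter> Ev E v. link_w T w \<tau> \<tau>')
       \<le> lam * (real s - 1) * wSet T w (A \<inter> Ev E v) + wSet T w (A \<inter> Ev E v) * level \<delta> A v"
proof -
  let ?a = "wSet T w (A \<inter> Ev E v)" and ?W = "wSet T w (Ev E v)"
  let ?M = "link_vol E T w v (A \<inter> Ev E v)" and ?D = "link_vol E T w v (Ev E v)"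
  have a_le: "?a \<le> ?M" and M_le: "?M \<le> (real s - 1) * ?a" using link_vol_bounds[OF A] by blast+
  have W_pos: "0 < ?W" using v light_subset wSet_Ev_pos by blast
  have W_le: "?W \<le> ?D" by (rule wSet_Ev_le_link_vol)
  have a0: "0 \<le> ?a" by (rule wSet_nonneg)
  then have M0: "0 \<le> ?M" using a_le by linarith
  have D_pos: "0 < ?D" using W_pos W_le by linarith
  have "(\<Sum>\<tau>\<in>A \<inter> Ev E v. \<Sum>\<tau>'\<in>A \<inter> Ev E v. link_w T w \<tau> \<tau>') \<le> ?M * (lam + ?M / ?D)"
    unfolding link_vol_def by (rule expander_internal_weight_le[OF finite_Ev link_w_nonneg ex lam]) blast
  also have "\<dots> \<le> lam * (real s - 1) * ?a + ?a * level \<delta> A v"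
  proof -
    have light: "?M / ?D < \<delta>" using v unfolding light_def delta_large_def by simp
    moreover have "0 \<le> ?M / ?D" using M0 D_pos by simp
    ultimately have "?M * (?M / ?D) \<le> ?M * \<delta>" "0 \<le> \<delta>"
      using M0 mult_left_mono[of "?M / ?D" \<delta> ?M] by simp_all
    then have "?M * (?M / ?D) \<le> (real s - 1) * ?a * \<delta>"
      using M_le by (meson mult_right_mono order_trans)
    then have by_cap: "?M * (?M / ?D) \<le> ?a * ((real s - 1) * \<delta>)" by (simp add: algebra_simps)
    have "?M * (?M / ?D) \<le> ?M * ?M / ?W"
      using W_pos W_le M0 by (simp add: divide_left_mono)
    also have "\<dots> \<le> ((real s - 1) * ?a) * ((real s - 1) * ?a) / ?W"
      using M0 M_le W_pos by (intro divide_right_mono mult_mono) simp_all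
    finally have by_density: "?M * (?M / ?D) \<le> ?a * ((real s - 1)\<^sup>2 * (?a / ?W))"
      by (simp add: power2_eq_square algebra_simps)
    have "?M * (?M / ?D) \<le> ?a * level \<delta> A v"
      using by_cap by_density unfolding level_def min_def by simp
    moreover have "lam * ?M \<le> lam * ((real s - 1) * ?a)" using lam M_le by (intro mult_left_mono)
    ultimately show ?thesis by (simp add: algebra_simps)
  qed
  finally show ?thesis .
qed

lemma sum_link_internal_light_le:
  assumes A: "A \<subseteq> E" and s: "1 \<le> s"
    and links: "\<forall>v\<in>V. expander (Ev E v) (link_w T w) lam" and lam: "0 \<le> lam" "lam < 1"
  shows "(\<Sum>v\<in>light \<delta> A. \<Sum>\<tau>\<in>A \<inter> Ev E v. \<Sum>\<tau>'\<in>A \<inter> Ev E v. link_w T w \<tau> \<tau>')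
       \<le> lam * (real s - 1) * (real k * wSet T w A)
         + (\<Sum>\<tau>\<in>A. wt \<tau> * (\<Sum>v\<in>\<tau> \<inter> light \<delta> A. level \<delta> A v))"
proof -
  let ?L = "light \<delta> A" and ?a = "\<lambda>v. wSet T w (A \<inter> Ev E v)"
  have "(\<Sum>v\<in>?L. \<Sum>\<tau>\<in>A \<inter> Ev E v. \<Sum>\<tau>'\<in>A \<inter> Ev E v. link_w T w \<tau> \<tau>')
      \<le> (\<Sum>v\<in>?L. lam * (real s - 1) * ?a v + ?a v * level \<delta> A v)"
    using link_internal_le_at_light[OF A s _ _ lam] links light_subset by (intro sum_mono) blast
  also have "\<dots> = lam * (real s - 1) * (\<Sum>v\<in>?L. ?a v) + (\<Sum>v\<in>?L. ?a v * level \<delta> A v)"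
    by (simp add: sum.distrib sum_distrib_left)
  also have "(\<Sum>v\<in>?L. ?a v) \<le> real k * wSet T w A"
    unfolding sum_wSet_Ev_V[OF A, symmetric]
    using finite_V light_subset wSet_nonneg by (intro sum_mono2) simp_all
  also have "(\<Sum>v\<in>?L. ?a v * level \<delta> A v) = (\<Sum>\<tau>\<in>A. wt \<tau> * (\<Sum>v\<in>\<tau> \<inter> ?L. level \<delta> A v))"
    unfolding wSet_def sum_distrib_left sum_distrib_right
    by (rule sum_vertices_faces_swap[OF A light_subset])
  finally show ?thesis using lam s by (simp add: mult_left_mono)
qed

text \<open>The subtraction is on \<open>nat\<close>: faces with no vertex at level \<open>t\<close> contribute \<open>0\<close>.\<close>

definition level_excess :: "('v \<Rightarrow> real) \<Rightarrow> 'v set set \<Rightarrow> real \<Rightarrow> real" where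
  "level_excess y A t = (\<Sum>\<tau>\<in>A. wt \<tau> * real (card {v\<in>\<tau>. t \<le> y v} - 1))"

lemma sum_face_levels_le:
  assumes A: "A \<subseteq> E" and k: "1 \<le> k"
    and y0: "\<And>v. v \<in> V \<Longrightarrow> 0 \<le> y v" and yb: "\<And>v. v \<in> V \<Longrightarrow> y v \<le> b"
    and y_top: "\<And>v. v \<in> V \<Longrightarrow> v \<notin> L \<Longrightarrow> y v = b"
  shows "(\<Sum>\<tau>\<in>A. wt \<tau> * (\<Sum>v\<in>\<tau> \<inter> L. y v))
       \<le> b * wSet T w {\<tau>\<in>A. \<tau> \<subseteq> L} + (real k - 1) * (b / 2 ^ J) * wSet T w A
         + (\<Sum>i\<in>{1..J}. (b / 2 ^ i) * level_excess y A (b / 2 ^ i))"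
proof -
  have finA: "finite A" using A finite_E finite_subset by blast
  have "(\<Sum>\<tau>\<in>A. wt \<tau> * (\<Sum>v\<in>\<tau> \<inter> L. y v))
      \<le> (\<Sum>\<tau>\<in>A. wt \<tau> * (b * (if \<tau> \<subseteq> L then 1 else 0) + (real k - 1) * (b / 2 ^ J)
           + (\<Sum>i\<in>{1..J}. (b / 2 ^ i) * real (card {v\<in>\<tau>. b / 2 ^ i \<le> y v} - 1))))"
  proof (intro sum_mono mult_left_mono[OF _ wE_nonneg])
    fix \<tau> assume "\<tau> \<in> A"
    then have \<tau>: "\<tau> \<in> E" "\<tau> \<subseteq> V" using A face_subset_V by blast+
    then have "real (card \<tau> - 1) = real k - 1" using card_face k by (simp add: of_nat_diff)
    then show "(\<Sum>v\<in>\<tau> \<inter> L. y v) \<le> b * (if \<tau> \<subseteq> L then 1 else 0) + (real k - 1) * (b / 2 ^ J)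
        + (\<Sum>i\<in>{1..J}. (b / 2 ^ i) * real (card {v\<in>\<tau>. b / 2 ^ i \<le> y v} - 1))"
      using sum_le_dyadic_level_counts[OF finite_face face_nonempty[OF k], of \<tau> y b L J] \<tau>
        y0 yb y_top by (metis subsetD)
  qed
  also have "\<dots> = b * wSet T w {\<tau>\<in>A. \<tau> \<subseteq> L} + (real k - 1) * (b / 2 ^ J) * wSet T w A
         + (\<Sum>i\<in>{1..J}. (b / 2 ^ i) * level_excess y A (b / 2 ^ i))"
  proof -
    have "(\<Sum>\<tau>\<in>A. wt \<tau> * (b * (if \<tau> \<subseteq> L then 1 else 0))) = b * wSet T w {\<tau>\<in>A. \<tau> \<subseteq> L}"
      unfolding wSet_def sum.inter_filter[OF finA] sum_distrib_left by (intro sum.cong) auto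
    moreover have "(\<Sum>\<tau>\<in>A. wt \<tau> * ((real k - 1) * (b / 2 ^ J))) = (real k - 1) * (b / 2 ^ J) * wSet T w A"
      unfolding wSet_def by (simp add: sum_distrib_right sum_divide_distrib mult.commute)
    moreover have "(\<Sum>\<tau>\<in>A. wt \<tau> * (\<Sum>i\<in>{1..J}. (b / 2 ^ i) * real (card {v\<in>\<tau>. b / 2 ^ i \<le> y v} - 1)))
        = (\<Sum>i\<in>{1..J}. (b / 2 ^ i) * level_excess y A (b / 2 ^ i))"
      unfolding level_excess_def sum_distrib_left by (subst sum.swap) (simp add: mult.left_commute)
    ultimately show ?thesis unfolding distrib_left sum.distrib by simp
  qed
  finally show ?thesis .
qed

lemma ground_gvol_ratio_le:
  assumes S: "S \<subseteq> V" and E_pos: "0 < wSet T w E" and k: "1 \<le> k"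
  shows "gvol V (ground_w E T w) S * (gvol V (ground_w E T w) S / gvol V (ground_w E T w) V)
         \<le> (\<Sum>u\<in>S. wSet T w (Ev E u))\<^sup>2 / wSet T w E"
proof (cases "k = 1")
  case False
  define Y where "Y = (\<Sum>u\<in>S. wSet T w (Ev E u))"
  let ?g = "gvol V (ground_w E T w)"
  have Y0: "0 \<le> Y" unfolding Y_def by (simp add: sum_nonneg wSet_nonneg)
  have "?g S \<le> real k * Y"
    unfolding ground_gvol_eq[OF S] Y_def[symmetric] using Y0 by (simp add: mult_right_mono)
  moreover have "?g S / ?g V = Y / (real k * wSet T w E)"
    unfolding ground_gvol_eq[OF S] ground_gvol_V Y_def using k False by simp
  moreover have "0 \<le> Y / (real k * wSet T w E)" using Y0 E_pos by simp
  ultimately have "?g S * (?g S / ?g V) \<le> real k * Y * (Y / (real k * wSet T w E))"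
    by (metis mult_right_mono)
  then show ?thesis using k unfolding Y_def by (simp add: power2_eq_square)
qed (use E_pos in \<open>simp add: ground_gvol_eq[OF S]\<close>)

text \<open>Expansion of the ground graph applied to the vertices where \<open>y\<close> reaches \<open>t\<close>: their
  volume is at most \<open>C / t\<close> times the weight \<open>N\<close> of their incidences with \<open>A\<close>, so only few
  faces of \<open>A\<close> can contain two of them.\<close>

lemma level_set_pairs_le:
  fixes y :: "'v \<Rightarrow> real"
  assumes A: "A \<subseteq> E" and ground: "expander V (ground_w E T w) lam" and lam: "0 \<le> lam" "lam < 1"
    and t: "0 < t" and C: "0 \<le> C" and k: "1 \<le> k" and E_pos: "0 < wSet T w E"
    and y_le: "\<And>v. v \<in> V \<Longrightarrow> y v * wSet T w (Ev E v) \<le> C * wSet T w (A \<inter> Ev E v)"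
  defines "N \<equiv> \<Sum>\<tau>\<in>A. wt \<tau> * real (card {v\<in>\<tau>. t \<le> y v})"
  shows "(\<Sum>\<tau>\<in>A. wt \<tau> * (real (card {v\<in>\<tau>. t \<le> y v}) * (real (card {v\<in>\<tau>. t \<le> y v}) - 1)))
         \<le> lam * (real k - 1) * C * N / t + C\<^sup>2 * N\<^sup>2 / (t\<^sup>2 * wSet T w E)"
proof -
  define S where "S = {v\<in>V. t \<le> y v}"
  define Y where "Y = (\<Sum>u\<in>S. wSet T w (Ev E u))"
  let ?g = "gvol V (ground_w E T w)" and ?W = "wSet T w E"
  have S: "S \<subseteq> V" unfolding S_def by blast
  have level_set: "{v\<in>\<tau>. t \<le> y v} = \<tau> \<inter> S" if "\<tau> \<in> A" for \<tau>
    using that A face_subset_V unfolding S_def by blast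
  have pairs_nonneg: "0 \<le> wt \<tau> * (real n * (real n - 1))" for \<tau> n
    using wE_nonneg by (cases n) simp_all
  have "(\<Sum>\<tau>\<in>A. wt \<tau> * (real (card {v\<in>\<tau>. t \<le> y v}) * (real (card {v\<in>\<tau>. t \<le> y v}) - 1)))
      = (\<Sum>\<tau>\<in>A. wt \<tau> * (real (card (\<tau> \<inter> S)) * (real (card (\<tau> \<inter> S)) - 1)))"
    using level_set by simp
  also have "\<dots> \<le> (\<Sum>\<tau>\<in>E. wt \<tau> * (real (card (\<tau> \<inter> S)) * (real (card (\<tau> \<inter> S)) - 1)))"
    using A finite_E pairs_nonneg by (intro sum_mono2) simp_all
  also have "\<dots> \<le> ?g S * (lam + ?g S / ?g V)"
    unfolding ground_internal_weight_eq[OF S, symmetric]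
    by (rule expander_internal_weight_le[OF finite_V ground_w_nonneg ground lam S])
  also have "\<dots> = lam * ((real k - 1) * Y) + ?g S * (?g S / ?g V)"
    unfolding ground_gvol_eq[OF S] Y_def by (simp add: algebra_simps)
  also have "\<dots> \<le> lam * (real k - 1) * C * N / t + C\<^sup>2 * N\<^sup>2 / (t\<^sup>2 * ?W)"
  proof (rule add_mono)
    have "t * wSet T w (Ev E u) \<le> C * wSet T w (A \<inter> Ev E u)" if "u \<in> S" for u
    proof -
      have "t * wSet T w (Ev E u) \<le> y u * wSet T w (Ev E u)"
        using that wSet_nonneg unfolding S_def by (intro mult_right_mono) simp_all
      then show ?thesis using that y_le[of u] unfolding S_def by simp
    qed
    then have "Y \<le> (\<Sum>u\<in>S. C * wSet T w (A \<inter> Ev E u) / t)"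
      unfolding Y_def using t by (intro sum_mono) (simp add: pos_le_divide_eq mult.commute)
    also have "\<dots> = C * N / t"
      unfolding sum_divide_distrib[symmetric] sum_distrib_left[symmetric] sum_wSet_Ev[OF A S] N_def
      using level_set by simp
    finally have Y_le: "Y \<le> C * N / t" .
    have Y0: "0 \<le> Y" unfolding Y_def by (simp add: sum_nonneg wSet_nonneg)
    show "lam * ((real k - 1) * Y) \<le> lam * (real k - 1) * C * N / t"
      using mult_left_mono[OF Y_le, of "lam * (real k - 1)"] lam k by simp
    have "?g S * (?g S / ?g V) \<le> Y\<^sup>2 / ?W"
      unfolding Y_def by (rule ground_gvol_ratio_le[OF S E_pos k])
    also have "\<dots> \<le> (C * N / t)\<^sup>2 / ?W"
      using Y0 Y_le E_pos by (intro divide_right_mono power_mono) simp_all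
    finally show "?g S * (?g S / ?g V) \<le> C\<^sup>2 * N\<^sup>2 / (t\<^sup>2 * ?W)"
      by (simp add: power_divide power_mult_distrib)
  qed
  finally show ?thesis .
qed

lemma level_excess_le:
  fixes y :: "'v \<Rightarrow> real"
  assumes A: "A \<subseteq> E" "A \<noteq> {}" and ground: "expander V (ground_w E T w) lam"
    and lam: "0 \<le> lam" "lam < 1" and t: "0 < t" and C: "0 \<le> C" and k: "1 \<le> k"
    and y_le: "\<And>v. v \<in> V \<Longrightarrow> y v * wSet T w (Ev E v) \<le> C * wSet T w (A \<inter> Ev E v)"
    and lam_small: "lam * real k * C / t \<le> 1/100"
    and t_large: "2 * C * sqrt (wSet T w A / wSet T w E) \<le> t"
  shows "t * level_excess y A t
         \<le> (27/40 * (lam * (real k - 1) * C) + 91/100 * (C\<^sup>2 * (wSet T w A / wSet T w E) / t))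
           * wSet T w A"
proof -
  define wA W where "wA = wSet T w A" and "W = wSet T w E"
  define n where "n \<tau> = card {v\<in>\<tau>. t \<le> y v}" for \<tau>
  define N where "N = (\<Sum>\<tau>\<in>A. wt \<tau> * real (n \<tau>))"
  define P where "P = (\<Sum>\<tau>\<in>A. wt \<tau> * (real (n \<tau>) * (real (n \<tau>) - 1)))"
  define m Q where "m = lam * (real k - 1) * C / t" and "Q = C\<^sup>2 / (t\<^sup>2 * W)"
  have wA_pos: "0 < wA" unfolding wA_def using wSet_pos[OF A] .
  then have W_pos: "0 < W" unfolding W_def wA_def using wSet_mono[OF A(1) order_refl] by linarith
  have N0: "0 \<le> N" unfolding N_def by (simp add: sum_nonneg wE_nonneg)
  have "P \<le> m * N + Q * N\<^sup>2"
    using level_set_pairs_le[OF A(1) ground lam t C k W_pos[unfolded W_def] y_le]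
    unfolding P_def N_def n_def m_def Q_def W_def by simp
  moreover have "N\<^sup>2 \<le> wA * (P + N)"
  proof -
    have "N\<^sup>2 \<le> wA * (\<Sum>\<tau>\<in>A. wt \<tau> * (real (n \<tau>))\<^sup>2)"
      unfolding N_def wA_def wSet_def by (rule weighted_Cauchy_Schwarz) (rule wE_nonneg)
    then show ?thesis
      unfolding P_def N_def by (simp add: sum.distrib[symmetric] power2_eq_square algebra_simps)
  qed
  moreover have "m \<le> 1/100"
  proof -
    have "m \<le> lam * real k * C / t" unfolding m_def using lam C t
      by (intro divide_right_mono mult_right_mono) (simp_all add: mult_left_mono)
    then show ?thesis using lam_small by linarith
  qed
  moreover have "Q * wA \<le> 1/4"
  proof -
    have "4 * (C\<^sup>2 * (wA / W)) = (2 * C * sqrt (wA / W))\<^sup>2"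
      using wA_pos W_pos by (simp add: power_mult_distrib)
    also have "\<dots> \<le> t\<^sup>2" using t_large C wA_pos W_pos unfolding wA_def W_def by (intro power_mono) simp_all
    finally show ?thesis unfolding Q_def using t W_pos by (simp add: field_simps)
  qed
  moreover have "0 \<le> m" "0 \<le> Q" unfolding m_def Q_def using lam C t k W_pos by simp_all
  ultimately have P_le: "P \<le> (27/20 * m + 91/50 * (Q * wA)) * wA"
    using pair_count_bootstrap[OF wA_pos N0] by blast
  have "level_excess y A t \<le> (\<Sum>\<tau>\<in>A. wt \<tau> * (real (n \<tau>) * (real (n \<tau>) - 1) / 2))"
    unfolding level_excess_def n_def using wE_nonneg real_pred_le_pairs
    by (intro sum_mono mult_left_mono) simp_all
  also have "\<dots> = P / 2" unfolding P_def by (simp add: sum_divide_distrib)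
  finally have "t * level_excess y A t \<le> t * (P / 2)" using t by (simp add: mult_left_mono)
  also have "\<dots> \<le> t * ((27/20 * m + 91/50 * (Q * wA)) * wA / 2)" using P_le t by simp
  also have "\<dots> = (27/40 * (lam * (real k - 1) * C) + 91/100 * (C\<^sup>2 * (wA / W) / t)) * wA"
    unfolding m_def Q_def using t W_pos by (simp add: field_simps power2_eq_square)
  finally show ?thesis unfolding wA_def W_def .
qed

lemma sum_level_excess_le:
  fixes y :: "'v \<Rightarrow> real"
  assumes A: "A \<subseteq> E" "A \<noteq> {}" and ground: "expander V (ground_w E T w) lam"
    and lam: "0 \<le> lam" "lam < 1" and b: "0 < b" and C: "0 < C" and k: "1 \<le> k"
    and y_le: "\<And>v. v \<in> V \<Longrightarrow> y v * wSet T w (Ev E v) \<le> C * wSet T w (A \<inter> Ev E v)"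
    and J: "J \<le> M" and lam_small: "lam * real k * C * 2 ^ M / b \<le> 1/100"
    and J_scale: "0 < J \<Longrightarrow> 2 * C * sqrt (wSet T w A / wSet T w E) \<le> b / 2 ^ J"
  shows "(\<Sum>i\<in>{1..J}. (b / 2 ^ i) * level_excess y A (b / 2 ^ i))
         \<le> (27/40 * real M * lam * real k * C + 91/100 * (C * sqrt (wSet T w A / wSet T w E)))
           * wSet T w A"
proof -
  define wA \<rho> where "wA = wSet T w A" and "\<rho> = wSet T w A / wSet T w E"
  have wA_pos: "0 < wA" unfolding wA_def using wSet_pos[OF A] .
  have \<rho>_pos: "0 < \<rho>" unfolding \<rho>_def using wA_pos wSet_mono[OF A(1) order_refl]
    unfolding wA_def by (simp add: zero_less_divide_iff)
  have "(b / 2 ^ i) * level_excess y A (b / 2 ^ i)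
        \<le> (27/40 * (lam * (real k - 1) * C) + 91/100 * (C\<^sup>2 * \<rho> * 2 ^ i / b)) * wA"
    if i: "i \<in> {1..J}" for i
  proof -
    have "b / 2 ^ J \<le> b / 2 ^ i" using i b by (simp add: divide_left_mono)
    have "lam * real k * C / (b / 2 ^ i) = lam * real k * C * 2 ^ i / b" by simp
    also have "\<dots> \<le> lam * real k * C * 2 ^ M / b"
      using i J lam C b by (intro divide_right_mono mult_left_mono) simp_all
    finally have small: "lam * real k * C / (b / 2 ^ i) \<le> 1/100" using lam_small by linarith
    have large: "2 * C * sqrt \<rho> \<le> b / 2 ^ i"
      using J_scale i \<open>b / 2 ^ J \<le> b / 2 ^ i\<close> unfolding \<rho>_def by force
    have "(b / 2 ^ i) * level_excess y A (b / 2 ^ i)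
        \<le> (27/40 * (lam * (real k - 1) * C) + 91/100 * (C\<^sup>2 * \<rho> / (b / 2 ^ i))) * wA"
      using level_excess_le[OF A ground lam _ less_imp_le[OF C] k y_le small large[unfolded \<rho>_def]] b
      unfolding wA_def \<rho>_def by simp
    also have "C\<^sup>2 * \<rho> / (b / 2 ^ i) = C\<^sup>2 * \<rho> * 2 ^ i / b" by simp
    finally show ?thesis .
  qed
  then have "(\<Sum>i\<in>{1..J}. (b / 2 ^ i) * level_excess y A (b / 2 ^ i))
      \<le> (\<Sum>i\<in>{1..J}. (27/40 * (lam * (real k - 1) * C) + 91/100 * (C\<^sup>2 * \<rho> * 2 ^ i / b)) * wA)"
    by (rule sum_mono)
  also have "\<dots> = (real J * (27/40 * (lam * (real k - 1) * C))
      + 91/100 * (C\<^sup>2 * \<rho> / b * (\<Sum>i\<in>{1..J}. 2 ^ i))) * wA"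
    by (simp add: sum.distrib sum_distrib_left sum_distrib_right sum_divide_distrib algebra_simps)
  also have "\<dots> \<le> (27/40 * real M * lam * real k * C + 91/100 * (C * sqrt \<rho>)) * wA"
  proof (intro mult_right_mono add_mono)
    have "real J * (lam * (real k - 1) * C) \<le> real M * (lam * real k * C)"
      using J lam C k by (intro mult_mono mult_right_mono mult_left_mono) simp_all
    from mult_left_mono[OF this, of "27/40"]
    show "real J * (27/40 * (lam * (real k - 1) * C)) \<le> 27/40 * real M * lam * real k * C"
      by (simp add: ac_simps)
    show "91/100 * (C\<^sup>2 * \<rho> / b * (\<Sum>i\<in>{1..J}. 2 ^ i)) \<le> 91/100 * (C * sqrt \<rho>)"
      using dyadic_density_sum_le[OF b C \<rho>_pos J_scale[folded \<rho>_def]] by (intro mult_left_mono) simp_all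
  qed (use wA_pos in simp)
  finally show ?thesis unfolding wA_def \<rho>_def .
qed

section \<open>Unique neighbour expansion\<close>

lemma Qnint_range:
  assumes R: "0 < R" "R \<le> R_nint T" and \<sigma>0: "\<sigma>0 \<in> T" "\<tau>0 \<in> \<sigma>0"
  obtains Qlo Qhi :: nat where "0 < Qlo" "Qhi \<le> K" "R * real Qhi \<le> real Qlo"
    "\<And>\<sigma> \<tau>. \<sigma> \<in> T \<Longrightarrow> \<tau> \<in> \<sigma> \<Longrightarrow> Qlo \<le> Qnint \<tau> \<sigma> \<and> Qnint \<tau> \<sigma> \<le> Qhi"
proof -
  define Qs where "Qs = {Qnint \<tau> \<sigma> | \<tau> \<sigma>. \<sigma> \<in> T \<and> \<tau> \<in> \<sigma>}"
  have le_K: "Qnint \<tau> \<sigma> \<le> K" if "\<sigma> \<in> T" for \<sigma> \<tau>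
    using card_mono[OF finite_top[OF that], of "{\<tau>'\<in>\<sigma>. \<tau> \<inter> \<tau>' = {}}"] card_top[OF that]
    unfolding Qnint_def by auto
  have Qs_le: "Qs \<subseteq> {..K}" unfolding Qs_def using le_K by blast
  then have fin: "finite Qs" by (rule finite_subset) simp
  have ne: "Qs \<noteq> {}" unfolding Qs_def using \<sigma>0 by blast
  have range: "Min Qs \<le> Qnint \<tau> \<sigma> \<and> Qnint \<tau> \<sigma> \<le> Max Qs" if "\<sigma> \<in> T" "\<tau> \<in> \<sigma>" for \<sigma> \<tau>
    using fin that unfolding Qs_def by (auto intro!: Min_le Max_ge)
  have "Max Qs \<in> Qs" using fin ne by simp
  then have Max_le: "Max Qs \<le> K" using Qs_le by auto
  have ratio: "R \<le> real (Min Qs) / real (Max Qs)" using R unfolding R_nint_def Qs_def by simp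
  then have "0 < Max Qs" using R(1) by (cases "Max Qs = 0") simp_all
  then have "R * real (Max Qs) \<le> real (Min Qs)" using ratio by (simp add: le_divide_eq)
  moreover have "0 < Min Qs" using ratio R(1) by (cases "Min Qs = 0") simp_all
  ultimately show ?thesis using that Max_le range by blast
qed

lemma nint_internal_weight_le:
  fixes Qlo Qhi :: real
  assumes A: "A \<subseteq> E" and ex: "expander E (nint_w T w) lam" and lam: "0 \<le> lam" "lam < 1"
    and k: "1 \<le> k" and Qlo: "0 < Qlo" and E_pos: "0 < wSet T w E"
    and Q: "\<And>\<sigma> \<tau>. \<sigma> \<in> T \<Longrightarrow> \<tau> \<in> \<sigma> \<Longrightarrow> Qlo \<le> real (Qnint \<tau> \<sigma>) \<and> real (Qnint \<tau> \<sigma>) \<le> Qhi"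
  shows "(\<Sum>\<tau>\<in>A. \<Sum>\<tau>'\<in>A. nint_w T w \<tau> \<tau>')
         \<le> Qhi * wSet T w A * (lam + Qhi * wSet T w A / (Qlo * wSet T w E))"
proof -
  let ?vA = "gvol E (nint_w T w) A" and ?vE = "gvol E (nint_w T w) E"
  have vA: "?vA \<le> Qhi * wSet T w A"
    unfolding gvol_def wSet_def sum_distrib_left
    using A Q face_nonempty[OF k] by (intro sum_mono nint_degree_bounds(2)) auto
  have vE: "Qlo * wSet T w E \<le> ?vE"
    unfolding gvol_def wSet_def sum_distrib_left
    using Q face_nonempty[OF k] by (intro sum_mono nint_degree_bounds(1)) auto
  have vA0: "0 \<le> ?vA" by (rule gvol_nonneg) (rule nint_w_nonneg)
  have den: "0 < Qlo * wSet T w E" using Qlo E_pos by simp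
  have "?vA / ?vE \<le> ?vA / (Qlo * wSet T w E)"
    using vA0 vE den by (intro divide_left_mono) simp_all
  also have "\<dots> \<le> Qhi * wSet T w A / (Qlo * wSet T w E)"
    using vA den by (intro divide_right_mono) simp_all
  finally have "?vA / ?vE \<le> Qhi * wSet T w A / (Qlo * wSet T w E)" .
  moreover have "0 \<le> ?vA / ?vE" using vA0 vE den by simp
  ultimately have "?vA * (lam + ?vA / ?vE) \<le> Qhi * wSet T w A * (lam + Qhi * wSet T w A / (Qlo * wSet T w E))"
    using vA vA0 lam by (intro mult_mono add_mono) simp_all
  then show ?thesis
    using expander_internal_weight_le[OF finite_E nint_w_nonneg ex lam A] by linarith
qed

lemma nint_internal_weight_lt:
  assumes A: "A \<subseteq> E" "A \<noteq> {}" and k: "1 \<le> k" and lam: "0 \<le> lam" "lam < 1"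
    and R: "0 < R" "R \<le> 1" "R \<le> R_nint T" and c: "0 < c"
    and nint: "\<not> nint_has_edges T \<or> expander E (nint_w T w) lam"
    and small: "wSet T w A / wSet T w E < R\<^sup>2 * c / 4 * (1 / real K)"
  shows "(\<Sum>\<tau>\<in>A. \<Sum>\<tau>'\<in>A. nint_w T w \<tau> \<tau>') < real K * lam * wSet T w A + c / 4 * wSet T w A"
proof -
  define wA W where "wA = wSet T w A" and "W = wSet T w E"
  have wA_pos: "0 < wA" unfolding wA_def using wSet_pos[OF A] .
  then have W_pos: "0 < W" unfolding W_def wA_def using wSet_mono[OF A(1) order_refl] by linarith
  obtain \<tau>0 \<sigma>0 where \<tau>0: "\<tau>0 \<in> A" and \<sigma>0: "\<sigma>0 \<in> T" "\<tau>0 \<in> \<sigma>0" using A Union_T by blast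
  obtain Qlo Qhi where Q: "0 < Qlo" "Qhi \<le> K" "R * real Qhi \<le> real Qlo"
    and Q_range: "\<And>\<sigma> \<tau>. \<sigma> \<in> T \<Longrightarrow> \<tau> \<in> \<sigma> \<Longrightarrow> Qlo \<le> Qnint \<tau> \<sigma> \<and> Qnint \<tau> \<sigma> \<le> Qhi"
    using Qnint_range[OF R(1,3) \<sigma>0] by blast
  have "nint_has_edges T"
    using nint_has_edges_if_Qnint_pos[OF \<sigma>0] face_nonempty[OF k] A(1) \<tau>0 Q(1) Q_range[OF \<sigma>0]
    by fastforce
  then have ex: "expander E (nint_w T w) lam" using nint by blast
  have "(\<Sum>\<tau>\<in>A. \<Sum>\<tau>'\<in>A. nint_w T w \<tau> \<tau>')
      \<le> real Qhi * wA * (lam + real Qhi * wA / (real Qlo * W))"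
    unfolding wA_def W_def
    by (rule nint_internal_weight_le[OF A(1) ex lam k _ W_pos[unfolded W_def]])
      (use Q(1) Q_range in auto)
  also have "\<dots> < real K * lam * wA + c / 4 * wA"
  proof -
    have "real Qhi * wA * lam \<le> real K * lam * wA"
      using Q(2) lam wA_pos by (simp add: mult_right_mono)
    moreover have "real Qhi * (real Qhi / real Qlo) * (wA / W) \<le> real K * (1 / R) * (wA / W)"
      using Q R wA_pos W_pos by (intro mult_right_mono mult_mono) (simp_all add: field_simps)
    moreover have "0 < K"
      using small wA_pos W_pos unfolding wA_def W_def
      by (cases "K = 0") (simp_all add: divide_less_0_iff)
    then have "real K * (1 / R) * (wA / W) < real K * (1 / R) * (R\<^sup>2 * c / 4 * (1 / real K))"
      using small R unfolding wA_def W_def by (intro mult_strict_left_mono) simp_all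
    moreover have "real K * (1 / R) * (R\<^sup>2 * c / 4 * (1 / real K)) \<le> c / 4"
      using R c \<open>0 < K\<close> by (simp add: power2_eq_square mult_le_cancel_right1)
    ultimately have "real Qhi * (real Qhi / real Qlo) * (wA / W) < c / 4" by linarith
    from mult_strict_right_mono[OF this wA_pos]
    have "real Qhi * wA * (real Qhi * wA / (real Qlo * W)) < c / 4 * wA"
      by (simp add: ac_simps)
    then show ?thesis using \<open>real Qhi * wA * lam \<le> _\<close> unfolding distrib_left by linarith
  qed
  finally show ?thesis unfolding wA_def .
qed

lemma locally_small_weight_le:
  assumes A: "A \<subseteq> E" and small: "locally_small V E T w \<delta> \<alpha> A"
    and no_unique: "\<forall>\<sigma>\<in>T. card (A \<inter> \<sigma>) \<noteq> 1"
    and links: "\<forall>v\<in>V. expander (Ev E v) (link_w T w) lam" and lam: "0 \<le> lam" "lam < 1"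
    and s: "1 \<le> s" and k: "1 \<le> k" and \<delta>: "0 \<le> \<delta>" "(real s - 1) * \<delta> \<le> 1"
  shows "(1 - \<alpha>) * (1 - (real s - 1) * \<delta>) * wSet T w A
       \<le> (\<Sum>\<tau>\<in>A. \<Sum>\<tau>'\<in>A. nint_w T w \<tau> \<tau>') + lam * (real s - 1) * (real k * wSet T w A)
         + (real k - 1) * ((real s - 1) * \<delta> / 2 ^ J) * wSet T w A
         + (\<Sum>i\<in>{1..J}. ((real s - 1) * \<delta> / 2 ^ i)
              * level_excess (level \<delta> A) A ((real s - 1) * \<delta> / 2 ^ i))"
proof -
  let ?b = "(real s - 1) * \<delta>" and ?L = "light \<delta> A"
  let ?A' = "{\<tau>\<in>A. \<tau> \<subseteq> ?L}"
  have "wSet T w ?A' \<le> (\<Sum>\<tau>\<in>A. \<Sum>\<tau>'\<in>A. nint_w T w \<tau> \<tau>')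
      + (\<Sum>v\<in>?L. \<Sum>\<tau>\<in>A \<inter> Ev E v. \<Sum>\<tau>'\<in>A \<inter> Ev E v. link_w T w \<tau> \<tau>')"
    by (rule inner_faces_weight_le[OF A light_subset no_unique])
  also have "(\<Sum>v\<in>?L. \<Sum>\<tau>\<in>A \<inter> Ev E v. \<Sum>\<tau>'\<in>A \<inter> Ev E v. link_w T w \<tau> \<tau>')
      \<le> lam * (real s - 1) * (real k * wSet T w A) + (\<Sum>\<tau>\<in>A. wt \<tau> * (\<Sum>v\<in>\<tau> \<inter> ?L. level \<delta> A v))"
    by (rule sum_link_internal_light_le[OF A s links lam])
  also have "(\<Sum>\<tau>\<in>A. wt \<tau> * (\<Sum>v\<in>\<tau> \<inter> ?L. level \<delta> A v))
      \<le> ?b * wSet T w ?A' + (real k - 1) * (?b / 2 ^ J) * wSet T w A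
        + (\<Sum>i\<in>{1..J}. (?b / 2 ^ i) * level_excess (level \<delta> A) A (?b / 2 ^ i))"
    using level_nonneg[OF s \<delta>(1)] level_le level_at_large[OF A s]
    by (intro sum_face_levels_le[OF A k]) blast+
  finally have "(1 - ?b) * wSet T w ?A' \<le> (\<Sum>\<tau>\<in>A. \<Sum>\<tau>'\<in>A. nint_w T w \<tau> \<tau>')
      + lam * (real s - 1) * (real k * wSet T w A) + (real k - 1) * (?b / 2 ^ J) * wSet T w A
      + (\<Sum>i\<in>{1..J}. (?b / 2 ^ i) * level_excess (level \<delta> A) A (?b / 2 ^ i))"
    by (simp add: algebra_simps)
  moreover have "(1 - \<alpha>) * (1 - ?b) * wSet T w A \<le> (1 - ?b) * wSet T w ?A'"
    using mult_left_mono[OF light_faces_weight_ge[OF A small], of "1 - ?b"] \<delta> by (simp add: ac_simps)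
  ultimately show ?thesis by linarith
qed

lemma level_contribution_le:
  assumes A: "A \<subseteq> E" "A \<noteq> {}" and ground: "expander V (ground_w E T w) lam"
    and lam: "0 \<le> lam" "lam < 1" and s: "2 \<le> s" and \<delta>: "0 < \<delta>" and k: "1 \<le> k"
    and lam_small: "lam * real k * (real s - 1)\<^sup>2 * 2 ^ M / ((real s - 1) * \<delta>) \<le> 1/100"
  obtains J where "(real k - 1) * ((real s - 1) * \<delta> / 2 ^ J) * wSet T w A
      + (\<Sum>i\<in>{1..J}. ((real s - 1) * \<delta> / 2 ^ i)
           * level_excess (level \<delta> A) A ((real s - 1) * \<delta> / 2 ^ i))
    \<le> (27/40 * real M * lam * real k * (real s - 1)\<^sup>2
       + 491/100 * (real k * (real s - 1)\<^sup>2 * sqrt (wSet T w A / wSet T w E))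
       + real k * ((real s - 1) * \<delta>) / 2 ^ M) * wSet T w A"
proof -
  define b C Z where "b = (real s - 1) * \<delta>" and "C = (real s - 1)\<^sup>2"
    and "Z = (real s - 1)\<^sup>2 * sqrt (wSet T w A / wSet T w E)"
  have b: "0 < b" and C: "0 < C" and Z: "0 \<le> Z" unfolding b_def C_def Z_def
    using s \<delta> wSet_nonneg[of A] wSet_nonneg[of E] by simp_all
  have wA: "0 < wSet T w A" using wSet_pos[OF A] .
  obtain J where J: "J \<le> M" and J_max: "b / 2 ^ J \<le> max (2 * (2 * Z)) (b / 2 ^ M)"
    and J_scale: "0 < J \<longrightarrow> 2 * Z \<le> b / 2 ^ J"
    using exists_dyadic_scale[where g = "2 * Z" and b = b and M = M] Z by auto
  have "0 \<le> b / 2 ^ M" using b by simp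
  then have "b / 2 ^ J \<le> 4 * Z + b / 2 ^ M" using J_max Z by (auto simp: max_def split: if_splits)
  then have "(real k - 1) * (b / 2 ^ J) \<le> real k * (4 * Z + b / 2 ^ M)"
    using Z b k by (intro mult_mono) simp_all
  from mult_right_mono[OF this less_imp_le[OF wA]]
  have "(real k - 1) * (b / 2 ^ J) * wSet T w A \<le> real k * (4 * Z + b / 2 ^ M) * wSet T w A" .
  also have "\<dots> = 4 * (real k * Z * wSet T w A) + real k * b / 2 ^ M * wSet T w A"
    by (simp add: algebra_simps)
  finally have levels_top: "(real k - 1) * (b / 2 ^ J) * wSet T w A
      \<le> 4 * (real k * Z * wSet T w A) + real k * b / 2 ^ M * wSet T w A" .
  have "lam * real k * C * 2 ^ M / b \<le> 1/100" using lam_small unfolding b_def C_def .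
  moreover have "0 < J \<Longrightarrow> 2 * C * sqrt (wSet T w A / wSet T w E) \<le> b / 2 ^ J"
    using J_scale unfolding Z_def C_def by (simp add: mult.assoc)
  ultimately have levels_rest: "(\<Sum>i\<in>{1..J}. (b / 2 ^ i) * level_excess (level \<delta> A) A (b / 2 ^ i))
      \<le> 27/40 * (real M * lam * real k * C * wSet T w A) + 91/100 * (Z * wSet T w A)"
    using sum_level_excess_le[OF A ground lam b C k level_mult_le[of _ \<delta> A, folded C_def] J]
    unfolding Z_def C_def by (simp add: algebra_simps)
  have "Z * wSet T w A \<le> real k * Z * wSet T w A"
    using k Z wA by (intro mult_right_mono) (simp_all add: mult_le_cancel_right1)
  moreover have "(27/40 * real M * lam * real k * C + 491/100 * (real k * Z) + real k * b / 2 ^ M)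
      * wSet T w A = 27/40 * (real M * lam * real k * C * wSet T w A)
      + 491/100 * (real k * Z * wSet T w A) + real k * b / 2 ^ M * wSet T w A"
    by (simp add: algebra_simps)
  ultimately have "(real k - 1) * (b / 2 ^ J) * wSet T w A
      + (\<Sum>i\<in>{1..J}. (b / 2 ^ i) * level_excess (level \<delta> A) A (b / 2 ^ i))
      \<le> (27/40 * real M * lam * real k * C + 491/100 * (real k * Z) + real k * b / 2 ^ M)
        * wSet T w A"
    using levels_top levels_rest by linarith
  then show ?thesis using that unfolding b_def C_def Z_def by (simp add: mult.assoc)
qed

lemma locally_small_weight_lt:
  assumes A: "A \<subseteq> E" "A \<noteq> {}" and small: "locally_small V E T w \<delta> \<alpha> A"
    and no_unique: "\<forall>\<sigma>\<in>T. card (A \<inter> \<sigma>) \<noteq> 1" and HDE: "HDE_system V E T w lam"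
    and lam: "0 \<le> lam" "lam < 1" and s: "2 \<le> s" and \<delta>: "0 < \<delta>" "(real s - 1) * \<delta> < 1"
    and \<alpha>: "\<alpha> < 1" and k: "1 \<le> k" and R: "0 < R" "R \<le> 1" "R \<le> R_nint T"
    and light: "wSet T w A / wSet T w E < R\<^sup>2 * ((1 - \<alpha>) * (1 - (real s - 1) * \<delta>)) / 4 * (1 / real K)"
    and lam_M: "lam * real k * (real s - 1)\<^sup>2 * 2 ^ M / ((real s - 1) * \<delta>) \<le> 1/100"
  shows "(1 - \<alpha>) * (1 - (real s - 1) * \<delta>) * wSet T w A
    < ((1 - \<alpha>) * (1 - (real s - 1) * \<delta>) / 4
       + lam * (real K + (real s - 1) * real k + real M * real k * (real s - 1)\<^sup>2)
       + real k * ((real s - 1) * \<delta>) / 2 ^ M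
       + 491/100 * (real k * (real s - 1)\<^sup>2 * sqrt (wSet T w A / wSet T w E))) * wSet T w A"
proof -
  define b c C \<rho> wA where "b = (real s - 1) * \<delta>" and "c = (1 - \<alpha>) * (1 - (real s - 1) * \<delta>)"
    and "C = (real s - 1)\<^sup>2" and "\<rho> = wSet T w A / wSet T w E" and "wA = wSet T w A"
  have c: "0 < c" unfolding c_def using \<alpha> \<delta> by simp
  have ground: "expander V (ground_w E T w) lam"
    and links: "\<forall>v\<in>V. expander (Ev E v) (link_w T w) lam"
    and nint: "\<not> nint_has_edges T \<or> expander E (nint_w T w) lam"
    using HDE unfolding HDE_system_def by blast+
  obtain J where levels: "(real k - 1) * (b / 2 ^ J) * wA
      + (\<Sum>i\<in>{1..J}. (b / 2 ^ i) * level_excess (level \<delta> A) A (b / 2 ^ i))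
    \<le> (27/40 * real M * lam * real k * C + 491/100 * (real k * C * sqrt \<rho>) + real k * b / 2 ^ M) * wA"
    using level_contribution_le[OF A ground lam s \<delta>(1) k lam_M]
    unfolding b_def C_def \<rho>_def wA_def by blast
  have "c * wA \<le> (\<Sum>\<tau>\<in>A. \<Sum>\<tau>'\<in>A. nint_w T w \<tau> \<tau>') + lam * (real s - 1) * (real k * wA)
      + (real k - 1) * (b / 2 ^ J) * wA
      + (\<Sum>i\<in>{1..J}. (b / 2 ^ i) * level_excess (level \<delta> A) A (b / 2 ^ i))"
    using locally_small_weight_le[OF A(1) small no_unique links lam _ k, of J] s \<delta>
    unfolding b_def c_def wA_def by simp
  also have "(\<Sum>\<tau>\<in>A. \<Sum>\<tau>'\<in>A. nint_w T w \<tau> \<tau>') < real K * lam * wA + c / 4 * wA"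
    using nint_internal_weight_lt[OF A k lam R c nint] light unfolding c_def wA_def by blast
  finally have "c * wA < c / 4 * wA + real K * lam * wA + lam * (real s - 1) * (real k * wA)
      + 27/40 * real M * lam * real k * C * wA + real k * b / 2 ^ M * wA
      + 491/100 * (real k * C * sqrt \<rho>) * wA"
    using levels by (simp add: algebra_simps)
  moreover have "27/40 * real M * lam * real k * C * wA \<le> real M * lam * real k * C * wA"
    using lam C_def wA_def wSet_nonneg by (simp add: mult_right_mono)
  ultimately show ?thesis unfolding b_def c_def C_def \<rho>_def wA_def by (simp add: algebra_simps)
qed

lemma unique_neighbor_expansion_if_HDE:
  assumes s: "2 \<le> s" and \<delta>: "0 < \<delta>" "(real s - 1) * \<delta> < 1" and \<alpha>: "0 \<le> \<alpha>" "\<alpha> < 1"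
    and R: "0 < R" "R \<le> 1" "R \<le> R_nint T" and lam: "0 \<le> lam" "lam < 1"
    and lam_K: "lam * (real K + (real s - 1) * real k + real M * real k * (real s - 1)\<^sup>2)
      \<le> (1 - \<alpha>) * (1 - (real s - 1) * \<delta>) / 20"
    and lam_M: "lam * real k * (real s - 1)\<^sup>2 * 2 ^ M / ((real s - 1) * \<delta>) \<le> 1/100"
    and M: "real k * ((real s - 1) * \<delta>) / 2 ^ M \<le> (1 - \<alpha>) * (1 - (real s - 1) * \<delta>) / 20"
    and HDE: "HDE_system V E T w lam"
  shows "unique_neighbor_expansion V E T w \<delta> \<alpha>
           (min (R\<^sup>2 * (1 - \<alpha>) * (1 - (real s - 1) * \<delta>) / 4 * (1 / real K))
                (7 * (1 - \<alpha>)\<^sup>2 * (1 - (real s - 1) * \<delta>) ^ 3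
                  / (64 * (1 + 15 * (real s - 1) * \<delta>) * real s ^ 3 * (real s - 1) ^ 4)
                  * (1 / (real k)\<^sup>2)))"
  unfolding unique_neighbor_expansion_def
proof (intro allI impI, rule ccontr)
  fix A assume A: "A \<subseteq> E" "A \<noteq> {}" and small: "locally_small V E T w \<delta> \<alpha> A"
    and light: "wSet T w A / wSet T w E <
      min (R\<^sup>2 * (1 - \<alpha>) * (1 - (real s - 1) * \<delta>) / 4 * (1 / real K))
          (7 * (1 - \<alpha>)\<^sup>2 * (1 - (real s - 1) * \<delta>) ^ 3
            / (64 * (1 + 15 * (real s - 1) * \<delta>) * real s ^ 3 * (real s - 1) ^ 4)
            * (1 / (real k)\<^sup>2))"
    and "\<not> (\<exists>\<sigma>\<in>T. card (A \<inter> \<sigma>) = 1)"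
  then have no_unique: "\<forall>\<sigma>\<in>T. card (A \<inter> \<sigma>) \<noteq> 1" by blast
  define b c \<rho> where "b = (real s - 1) * \<delta>" and "c = (1 - \<alpha>) * (1 - (real s - 1) * \<delta>)"
    and "\<rho> = wSet T w A / wSet T w E"
  have \<rho>: "0 \<le> \<rho>" unfolding \<rho>_def by (simp add: wSet_nonneg)
  have c: "0 < c" unfolding c_def using \<alpha> \<delta> by simp
  have "15 * (real s - 1) * \<delta> = 15 * b" unfolding b_def by simp
  then have \<rho>_K: "\<rho> < R\<^sup>2 * c / 4 * (1 / real K)"
    and \<rho>_k: "\<rho> < 7 * (1 - \<alpha>)\<^sup>2 * (1 - b) ^ 3 / (64 * (1 + 15 * b) * real s ^ 3 * (real s - 1) ^ 4)
      * (1 / (real k)\<^sup>2)"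
    using light unfolding min_less_iff_conj \<rho>_def c_def b_def[symmetric] by (simp_all add: mult.assoc)
  have k: "1 \<le> k" using \<rho>_k \<rho> by (cases k) simp_all
  have "real k * (real s - 1)\<^sup>2 * sqrt \<rho> \<le> 117/1000 * c"
    using sqrt_density_bound[of "real s" \<alpha> b "real k" \<rho>] s \<alpha> \<delta> k \<rho> \<rho>_k
    unfolding c_def b_def by simp
  \<comment> \<open>the four terms sum to at most \<open>(1/4 + 1/20 + 1/20 + 4.91 * 0.117) * c < c\<close>\<close>
  then have "c / 4 + lam * (real K + (real s - 1) * real k + real M * real k * (real s - 1)\<^sup>2)
      + real k * b / 2 ^ M + 491/100 * (real k * (real s - 1)\<^sup>2 * sqrt \<rho>) \<le> c"
    using lam_K M c unfolding c_def b_def by linarith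
  then have "(c / 4 + lam * (real K + (real s - 1) * real k + real M * real k * (real s - 1)\<^sup>2)
      + real k * b / 2 ^ M + 491/100 * (real k * (real s - 1)\<^sup>2 * sqrt \<rho>)) * wSet T w A
      \<le> c * wSet T w A"
    by (rule mult_right_mono) (rule wSet_nonneg)
  moreover have "c * wSet T w A < (c / 4
      + lam * (real K + (real s - 1) * real k + real M * real k * (real s - 1)\<^sup>2)
      + real k * b / 2 ^ M + 491/100 * (real k * (real s - 1)\<^sup>2 * sqrt \<rho>)) * wSet T w A"
    using locally_small_weight_lt[OF A small no_unique HDE lam s \<delta> \<alpha>(2) k R \<rho>_K[unfolded \<rho>_def c_def] lam_M]
    unfolding b_def c_def \<rho>_def .
  ultimately show False by simp
qed
end

lemma expansion_parameters_exist:
  fixes s k K :: nat and \<delta> \<alpha> :: real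
  assumes s: "2 \<le> s" and \<delta>: "0 < \<delta>" "(real s - 1) * \<delta> < 1" and \<alpha>: "\<alpha> < 1"
  obtains M :: nat and lam :: real where "0 < lam" "lam < 1"
    "lam * (real K + (real s - 1) * real k + real M * real k * (real s - 1)\<^sup>2)
      \<le> (1 - \<alpha>) * (1 - (real s - 1) * \<delta>) / 20"
    "lam * real k * (real s - 1)\<^sup>2 * 2 ^ M / ((real s - 1) * \<delta>) \<le> 1/100"
    "real k * ((real s - 1) * \<delta>) / 2 ^ M \<le> (1 - \<alpha>) * (1 - (real s - 1) * \<delta>) / 20"
proof -
  define b c where "b = (real s - 1) * \<delta>" and "c = (1 - \<alpha>) * (1 - (real s - 1) * \<delta>)"
  have b: "0 < b" and c: "0 < c" unfolding b_def c_def using s \<delta> \<alpha> by simp_all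
  define M where "M = nat \<lceil>20 * real k * b / c\<rceil>"
  have "20 * real k * b / c \<le> real M" unfolding M_def by linarith
  also have "\<dots> \<le> 2 ^ M" using of_nat_less_two_power[of M, where 'a = real] by linarith
  finally have "20 * real k * b / c \<le> 2 ^ M" .
  then have M_large: "real k * b / 2 ^ M \<le> c / 20" using c by (simp add: field_simps)
  define D F where "D = real K + (real s - 1) * real k + real M * real k * (real s - 1)\<^sup>2"
    and "F = real k * (real s - 1)\<^sup>2 * 2 ^ M"
  have D: "0 \<le> D" and F: "0 \<le> F" unfolding D_def F_def using s by simp_all
  define lam where "lam = min (1/2) (min (c / (20 * (D + 1))) (b / (100 * (F + 1))))"
  have lam: "0 < lam" "lam < 1" unfolding lam_def using b c D F by simp_all
  have "lam * D \<le> c / (20 * (D + 1)) * (D + 1)"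
    unfolding lam_def using c D by (intro mult_mono) simp_all
  also have "\<dots> = c / 20" using D by (simp add: field_simps)
  finally have lam_D: "lam * D \<le> c / 20" .
  have "lam * F \<le> b / (100 * (F + 1)) * (F + 1)"
    unfolding lam_def using b F by (intro mult_mono) simp_all
  also have "\<dots> = b / 100" using F by (simp add: field_simps)
  finally have lam_F: "lam * F / b \<le> 1/100" using b by (simp add: divide_le_eq)
  show ?thesis
    using that[of lam M] lam lam_D lam_F M_large
    unfolding D_def F_def b_def c_def by (simp add: mult.assoc)
qed

theorem theorem4p13:
  fixes s k K :: nat and R \<delta> \<alpha> :: real
  assumes "s \<ge> 2" and "0 < R" and "R \<le> 1"
    and "0 < \<delta>" and "\<delta> < 1 / (real s - 1)"
    and "0 \<le> \<alpha>" and "\<alpha> < 1"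
  shows "\<exists>lam>0. \<forall>(V :: 'v set) E T (w :: 'v set set \<Rightarrow> real).
           two_layer_system s k K V E T \<longrightarrow> (\<forall>\<sigma>\<in>T. w \<sigma> > 0) \<longrightarrow>
           R_nint T \<ge> R \<longrightarrow> HDE_system V E T w lam \<longrightarrow>
           unique_neighbor_expansion V E T w \<delta> \<alpha>
             (min (R\<^sup>2 * (1 - \<alpha>) * (1 - (real s - 1) * \<delta>) / 4 * (1 / real K))
                  (7 * (1 - \<alpha>)\<^sup>2 * (1 - (real s - 1) * \<delta>) ^ 3
                    / (64 * (1 + 15 * (real s - 1) * \<delta>) * real s ^ 3 * (real s - 1) ^ 4)
                    * (1 / (real k)\<^sup>2)))"
proof -
  have \<delta>: "(real s - 1) * \<delta> < 1"
    using assms(1,5) by (simp add: less_divide_eq mult.commute)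
  obtain M lam where lam: "0 < lam" "lam < 1" and params:
    "lam * (real K + (real s - 1) * real k + real M * real k * (real s - 1)\<^sup>2)
      \<le> (1 - \<alpha>) * (1 - (real s - 1) * \<delta>) / 20"
    "lam * real k * (real s - 1)\<^sup>2 * 2 ^ M / ((real s - 1) * \<delta>) \<le> 1/100"
    "real k * ((real s - 1) * \<delta>) / 2 ^ M \<le> (1 - \<alpha>) * (1 - (real s - 1) * \<delta>) / 20"
    using expansion_parameters_exist[OF assms(1,4) \<delta> assms(7)] by blast
  show ?thesis
    apply (intro exI[of _ lam] conjI allI impI)
    subgoal by (rule lam(1))
    subgoal premises prems for V E T w
    proof -
      interpret weighted_two_layer_system s k K V E T w using prems(1,2) by unfold_locales auto
      show ?thesis
        using unique_neighbor_expansion_if_HDE[OF assms(1,4) \<delta> assms(6,7) assms(2,3) prems(3)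
            less_imp_le[OF lam(1)] lam(2) params prems(4)] .
    qed
    done
qed

end
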